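(* Let $\Bbbk$ be a commutative ring of global dimension zero and let $C$ be a $\Bbbk$-coalgebra. The Hattori--Stallings corank $[M]\mapsto \mathrm{cotr}_M(\mathrm{id}_M)$ defines a homomorphism of abelian groups \[K_0^c(C)\longrightarrow \mathrm{coHH}_0(C)^*=\mathrm{Hom}_\Bbbk(\mathrm{coHH}_0(C),\Bbbk).\]
   Context: $\Bbbk$ is a finite product of fields; $\otimes=\otimes_\Bbbk$. $C=(C,\Delta,\varepsilon)$ is a coassociative counital $\Bbbk$-coalgebra; Sweedler notation $\Delta(c)=\sum c_{(1)}\otimes c_{(2)}$, and $\tau$ is the swap. $\mathrm{coHH}_0(C)$ is the kernel of $\Delta-\tau\circ\Delta\colon C\to C\otimes C$. A left $C$-comodule $M$ is finitely cogenerated if there is a $C$-colinear monomorphism $M\hookrightarrow C^{\oplus n}$ for some $n\ge0$; it is injective in the abelian category of left $C$-comodules. $K_0^c(C)$ is the group completion of the commutative monoid (under $\oplus$) of isomorphism classes of finitely cogenerated injective left $C$-comodules. Hattori--Stallings cotrace: for such $M$ choose a $C$-colinear monomorphism $i\colon M\to C^{\oplus n}$ and a $C$-colinear retraction $s\colon C^{\oplus n}\to M$. For a $C$-colinear $f\colon M\to M$, the $C$-colinear endomorphism $i\circ f\circ s$ of the cofree comodule $C^{\oplus n}=C\otimes\Bbbk^n$ corresponds, via ${}_C\mathrm{End}(C\otimes \Bbbk^n)\cong\mathrm{Hom}_\Bbbk(C\otimes\Bbbk^n,\Bbbk^n)\cong\mathrm{Hom}_\Bbbk(C,\mathcal M_n(\Bbbk))$,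 to a $\Bbbk$-linear map $c\mapsto f_c$. Define $\mathrm{cotr}_M(f)\in\mathrm{coHH}_0(C)^*$ by $\mathrm{cotr}_M(f)(c)=\sum\varepsilon(c_{(1)})\,\mathrm{tr}(f_{c_{(2)}})$ for $c\in\mathrm{coHH}_0(C)$. The corank of $M$ is $\mathrm{cotr}_M(\mathrm{id}_M)$. *)

theory Defs
  imports Main "HOL-Algebra.Group" "HOL-Library.Function_Algebras"
begin

text \<open>A commutative ring is (isomorphic to) a finite product of fields iff it has a finite
family of nonzero pairwise orthogonal idempotents summing to 1 such that each e*k is a field
(with unit e).\<close>
definition finite_product_of_fields :: "'k::comm_ring_1 itself \<Rightarrow> bool" where
  "finite_product_of_fields _ \<longleftrightarrow>
     (\<exists>E::'k set. finite E \<and> sum id E = 1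
        \<and> (\<forall>e\<in>E. e * e = e \<and> e \<noteq> 0)
        \<and> (\<forall>e\<in>E. \<forall>e'\<in>E. e \<noteq> e' \<longrightarrow> e * e' = 0)
        \<and> (\<forall>e\<in>E. \<forall>x. x * e \<noteq> 0 \<longrightarrow> (\<exists>y. x * e * y = e)))"

text \<open>A formal sum of simple tensors is a list of pairs; A \<otimes>_k B = Z[A x B] / R
where R is generated by biadditivity and balancedness.\<close>

definition delta :: "'a \<Rightarrow> 'a \<Rightarrow> int" where
  "delta p = (\<lambda>q. if q = p then 1 else 0)"

inductive_set tzero :: "('k::comm_ring_1 \<Rightarrow> 'a \<Rightarrow> 'a) \<Rightarrow> ('k \<Rightarrow> 'b \<Rightarrow> 'b)
    \<Rightarrow> (('a::ab_group_add \<times> 'b::ab_group_add) \<Rightarrow> int) set"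
  for sa sb where
  tz0: "(\<lambda>_. 0) \<in> tzero sa sb"
| tzaddl: "(\<lambda>q. delta (x + x', y) q - delta (x, y) q - delta (x', y) q) \<in> tzero sa sb"
| tzaddr: "(\<lambda>q. delta (x, y + y') q - delta (x, y) q - delta (x, y') q) \<in> tzero sa sb"
| tzbal: "(\<lambda>q. delta (sa a x, y) q - delta (x, sb a y) q) \<in> tzero sa sb"
| tzplus: "f \<in> tzero sa sb \<Longrightarrow> g \<in> tzero sa sb \<Longrightarrow> (\<lambda>q. f q + g q) \<in> tzero sa sb"
| tzuminus: "f \<in> tzero sa sb \<Longrightarrow> (\<lambda>q. - f q) \<in> tzero sa sb"

definition tensor_eq :: "('k::comm_ring_1 \<Rightarrow> 'a \<Rightarrow> 'a) \<Rightarrow> ('k \<Rightarrow> 'b \<Rightarrow> 'b)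
    \<Rightarrow> ('a::ab_group_add \<times> 'b::ab_group_add) list \<Rightarrow> ('a \<times> 'b) list \<Rightarrow> bool" where
  "tensor_eq sa sb L1 L2 \<longleftrightarrow>
     (\<lambda>q. int (count_list L1 q) - int (count_list L2 q)) \<in> tzero sa sb"

inductive_set tzero3 :: "('k::comm_ring_1 \<Rightarrow> 'a \<Rightarrow> 'a) \<Rightarrow> ('k \<Rightarrow> 'b \<Rightarrow> 'b) \<Rightarrow> ('k \<Rightarrow> 'c \<Rightarrow> 'c)
    \<Rightarrow> (('a::ab_group_add \<times> 'b::ab_group_add \<times> 'c::ab_group_add) \<Rightarrow> int) set"
  for sa sb sc where
  tz30: "(\<lambda>_. 0) \<in> tzero3 sa sb sc"
| tz3add1: "(\<lambda>q. delta (x + x', y, z) q - delta (x, y, z) q - delta (x', y, z) q) \<in> tzero3 sa sb sc"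
| tz3add2: "(\<lambda>q. delta (x, y + y', z) q - delta (x, y, z) q - delta (x, y', z) q) \<in> tzero3 sa sb sc"
| tz3add3: "(\<lambda>q. delta (x, y, z + z') q - delta (x, y, z) q - delta (x, y, z') q) \<in> tzero3 sa sb sc"
| tz3bal1: "(\<lambda>q. delta (sa a x, y, z) q - delta (x, sb a y, z) q) \<in> tzero3 sa sb sc"
| tz3bal2: "(\<lambda>q. delta (x, sb a y, z) q - delta (x, y, sc a z) q) \<in> tzero3 sa sb sc"
| tz3plus: "f \<in> tzero3 sa sb sc \<Longrightarrow> g \<in> tzero3 sa sb sc \<Longrightarrow> (\<lambda>q. f q + g q) \<in> tzero3 sa sb sc"
| tz3uminus: "f \<in> tzero3 sa sb sc \<Longrightarrow> (\<lambda>q. - f q) \<in> tzero3 sa sb sc"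

definition tensor3_eq :: "('k::comm_ring_1 \<Rightarrow> 'a \<Rightarrow> 'a) \<Rightarrow> ('k \<Rightarrow> 'b \<Rightarrow> 'b) \<Rightarrow> ('k \<Rightarrow> 'c \<Rightarrow> 'c)
    \<Rightarrow> ('a::ab_group_add \<times> 'b::ab_group_add \<times> 'c::ab_group_add) list \<Rightarrow> ('a \<times> 'b \<times> 'c) list \<Rightarrow> bool" where
  "tensor3_eq sa sb sc L1 L2 \<longleftrightarrow>
     (\<lambda>q. int (count_list L1 q) - int (count_list L2 q)) \<in> tzero3 sa sb sc"

text \<open>The comultiplication is given by a choice of representative
\<Delta>(c) = sum of c1 \<otimes> c2 (a list of pairs); conditions are up to equality in the tensor product.\<close>

definition coalgebra :: "('k::comm_ring_1 \<Rightarrow> 'c::ab_group_add \<Rightarrow> 'c)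
    \<Rightarrow> ('c \<Rightarrow> ('c \<times> 'c) list) \<Rightarrow> ('c \<Rightarrow> 'k) \<Rightarrow> bool" where
  "coalgebra sc \<Delta> \<epsilon> \<longleftrightarrow>
     (\<forall>a x y. sc a (x + y) = sc a x + sc a y) \<and> (\<forall>a b x. sc (a + b) x = sc a x + sc b x)
   \<and> (\<forall>a b x. sc a (sc b x) = sc (a * b) x) \<and> (\<forall>x. sc 1 x = x)
   \<and> (\<forall>x y. \<epsilon> (x + y) = \<epsilon> x + \<epsilon> y) \<and> (\<forall>a x. \<epsilon> (sc a x) = a * \<epsilon> x)
   \<and> (\<forall>x y. tensor_eq sc sc (\<Delta> (x + y)) (\<Delta> x @ \<Delta> y))
   \<and> (\<forall>a x. tensor_eq sc sc (\<Delta> (sc a x)) (map (\<lambda>(u, v). (sc a u, v)) (\<Delta> x)))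
   \<and> (\<forall>c. tensor3_eq sc sc sc
          (concat (map (\<lambda>(u, v). map (\<lambda>(u1, u2). (u1, u2, v)) (\<Delta> u)) (\<Delta> c)))
          (concat (map (\<lambda>(u, v). map (\<lambda>(v1, v2). (u, v1, v2)) (\<Delta> v)) (\<Delta> c))))
   \<and> (\<forall>c. sum_list (map (\<lambda>(u, v). sc (\<epsilon> u) v) (\<Delta> c)) = c)
   \<and> (\<forall>c. sum_list (map (\<lambda>(u, v). sc (\<epsilon> v) u) (\<Delta> c)) = c)"

definition coHH0 :: "('k::comm_ring_1 \<Rightarrow> 'c::ab_group_add \<Rightarrow> 'c) \<Rightarrow> ('c \<Rightarrow> ('c \<times> 'c) list) \<Rightarrow> 'c set" where
  "coHH0 sc \<Delta> = {c. tensor_eq sc sc (\<Delta> c) (map (\<lambda>(u, v). (v, u)) (\<Delta> c))}"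

text \<open>All comodules considered live in the ambient k-module nat \<Rightarrow> C (pointwise operations);
C^n is the set of vectors supported on {0..<n}.\<close>

definition vscale :: "('k \<Rightarrow> 'c \<Rightarrow> 'c) \<Rightarrow> 'k \<Rightarrow> (nat \<Rightarrow> 'c) \<Rightarrow> (nat \<Rightarrow> 'c)" where
  "vscale sc a x = (\<lambda>i. sc a (x i))"

definition vadd :: "(nat \<Rightarrow> 'c::ab_group_add) \<Rightarrow> (nat \<Rightarrow> 'c) \<Rightarrow> (nat \<Rightarrow> 'c)" where
  "vadd x y = (\<lambda>i. x i + y i)"

definition vzero :: "nat \<Rightarrow> 'c::ab_group_add" where
  "vzero = (\<lambda>_. 0)"

definition vins :: "nat \<Rightarrow> 'c::ab_group_add \<Rightarrow> (nat \<Rightarrow> 'c)" where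
  "vins l v = (\<lambda>j. if j = l then v else 0)"

definition Cn :: "nat \<Rightarrow> (nat \<Rightarrow> 'c::ab_group_add) set" where
  "Cn n = {x. \<forall>i\<ge>n. x i = 0}"

definition coact :: "('c \<Rightarrow> ('c \<times> 'c) list) \<Rightarrow> nat \<Rightarrow> (nat \<Rightarrow> 'c::ab_group_add) \<Rightarrow> ('c \<times> (nat \<Rightarrow> 'c)) list" where
  "coact \<Delta> n x = concat (map (\<lambda>i. map (\<lambda>(u, v). (u, vins i v)) (\<Delta> (x i))) [0..<n])"

definition subcomodule :: "('k::comm_ring_1 \<Rightarrow> 'c::ab_group_add \<Rightarrow> 'c) \<Rightarrow> ('c \<Rightarrow> ('c \<times> 'c) list)
    \<Rightarrow> nat \<Rightarrow> (nat \<Rightarrow> 'c) set \<Rightarrow> bool" where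
  "subcomodule sc \<Delta> n M \<longleftrightarrow>
     M \<subseteq> Cn n \<and> vzero \<in> M \<and> (\<forall>x\<in>M. \<forall>y\<in>M. vadd x y \<in> M) \<and> (\<forall>a. \<forall>x\<in>M. vscale sc a x \<in> M)
   \<and> (\<forall>x\<in>M. \<exists>L. set L \<subseteq> UNIV \<times> M \<and> tensor_eq sc (vscale sc) L (coact \<Delta> n x))"

definition colinear :: "('k::comm_ring_1 \<Rightarrow> 'c::ab_group_add \<Rightarrow> 'c) \<Rightarrow> ('c \<Rightarrow> ('c \<times> 'c) list)
    \<Rightarrow> nat \<Rightarrow> (nat \<Rightarrow> 'c) set \<Rightarrow> nat \<Rightarrow> (nat \<Rightarrow> 'c) set \<Rightarrow> ((nat \<Rightarrow> 'c) \<Rightarrow> (nat \<Rightarrow> 'c)) \<Rightarrow> bool" where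
  "colinear sc \<Delta> n A m B f \<longleftrightarrow>
     (\<forall>x\<in>A. f x \<in> B)
   \<and> (\<forall>x\<in>A. \<forall>y\<in>A. f (vadd x y) = vadd (f x) (f y))
   \<and> (\<forall>a. \<forall>x\<in>A. f (vscale sc a x) = vscale sc a (f x))
   \<and> (\<forall>x\<in>A. \<forall>L. set L \<subseteq> UNIV \<times> A \<and> tensor_eq sc (vscale sc) L (coact \<Delta> n x) \<longrightarrow>
        tensor_eq sc (vscale sc) (map (\<lambda>(u, y). (u, f y)) L) (coact \<Delta> m (f x)))"

text \<open>Injectivity in the category of comodules (extension property), tested against
monomorphisms between finitely cogenerated comodules.\<close>
definition injective_comod :: "('k::comm_ring_1 \<Rightarrow> 'c::ab_group_add \<Rightarrow> 'c) \<Rightarrow> ('c \<Rightarrow> ('c \<times> 'c) list)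
    \<Rightarrow> nat \<Rightarrow> (nat \<Rightarrow> 'c) set \<Rightarrow> bool" where
  "injective_comod sc \<Delta> n M \<longleftrightarrow>
     subcomodule sc \<Delta> n M \<and>
     (\<forall>p A B g. subcomodule sc \<Delta> p A \<and> subcomodule sc \<Delta> p B \<and> A \<subseteq> B \<and> colinear sc \<Delta> p A n M g
        \<longrightarrow> (\<exists>h. colinear sc \<Delta> p B n M h \<and> (\<forall>x\<in>A. h x = g x)))"

type_synonym 'c cobj = "nat \<times> (nat \<Rightarrow> 'c) set"

definition valid_obj :: "('k::comm_ring_1 \<Rightarrow> 'c::ab_group_add \<Rightarrow> 'c) \<Rightarrow> ('c \<Rightarrow> ('c \<times> 'c) list) \<Rightarrow> 'c cobj \<Rightarrow> bool" where
  "valid_obj sc \<Delta> P \<longleftrightarrow> injective_comod sc \<Delta> (fst P) (snd P)"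

definition iso_obj :: "('k::comm_ring_1 \<Rightarrow> 'c::ab_group_add \<Rightarrow> 'c) \<Rightarrow> ('c \<Rightarrow> ('c \<times> 'c) list) \<Rightarrow> 'c cobj \<Rightarrow> 'c cobj \<Rightarrow> bool" where
  "iso_obj sc \<Delta> P Q \<longleftrightarrow>
     (\<exists>f. colinear sc \<Delta> (fst P) (snd P) (fst Q) (snd Q) f \<and> bij_betw f (snd P) (snd Q))"

definition dsum :: "'c::ab_group_add cobj \<Rightarrow> 'c cobj \<Rightarrow> 'c cobj" where
  "dsum P Q = (fst P + fst Q,
      {(\<lambda>i. if i < fst P then x i else y (i - fst P)) | x y. x \<in> snd P \<and> y \<in> snd Q})"

definition zobj :: "'c::ab_group_add cobj" where
  "zobj = (0, {vzero})"

definition K0rel :: "('k::comm_ring_1 \<Rightarrow> 'c::ab_group_add \<Rightarrow> 'c) \<Rightarrow> ('c \<Rightarrow> ('c \<times> 'c) list)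
    \<Rightarrow> 'c cobj \<times> 'c cobj \<Rightarrow> 'c cobj \<times> 'c cobj \<Rightarrow> bool" where
  "K0rel sc \<Delta> PQ PQ' \<longleftrightarrow>
     (\<exists>R. valid_obj sc \<Delta> R \<and>
        iso_obj sc \<Delta> (dsum (dsum (fst PQ) (snd PQ')) R) (dsum (dsum (fst PQ') (snd PQ)) R))"

text \<open>The class of the formal difference [P] - [Q].\<close>
definition K0cls :: "('k::comm_ring_1 \<Rightarrow> 'c::ab_group_add \<Rightarrow> 'c) \<Rightarrow> ('c \<Rightarrow> ('c \<times> 'c) list)
    \<Rightarrow> 'c cobj \<Rightarrow> 'c cobj \<Rightarrow> ('c cobj \<times> 'c cobj) set" where
  "K0cls sc \<Delta> P Q = {PQ'. valid_obj sc \<Delta> (fst PQ') \<and> valid_obj sc \<Delta> (snd PQ') \<and> K0rel sc \<Delta> (P, Q) PQ'}"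

definition K0c :: "('k::comm_ring_1 \<Rightarrow> 'c::ab_group_add \<Rightarrow> 'c) \<Rightarrow> ('c \<Rightarrow> ('c \<times> 'c) list)
    \<Rightarrow> ('c cobj \<times> 'c cobj) set monoid" where
  "K0c sc \<Delta> =
     \<lparr>carrier = {K0cls sc \<Delta> P Q | P Q. valid_obj sc \<Delta> P \<and> valid_obj sc \<Delta> Q},
      mult = (\<lambda>X Y. let PQ = (SOME PQ. PQ \<in> X); PQ' = (SOME PQ'. PQ' \<in> Y)
                     in K0cls sc \<Delta> (dsum (fst PQ) (fst PQ')) (dsum (snd PQ) (snd PQ'))),
      one = K0cls sc \<Delta> zobj zobj\<rparr>"

definition dual_coHH0 :: "('k::comm_ring_1 \<Rightarrow> 'c::ab_group_add \<Rightarrow> 'c) \<Rightarrow> ('c \<Rightarrow> ('c \<times> 'c) list)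
    \<Rightarrow> ('c \<Rightarrow> 'k) monoid" where
  "dual_coHH0 sc \<Delta> =
     \<lparr>carrier = {\<phi>. (\<forall>x\<in>coHH0 sc \<Delta>. \<forall>y\<in>coHH0 sc \<Delta>. \<phi> (x + y) = \<phi> x + \<phi> y)
                  \<and> (\<forall>a. \<forall>x\<in>coHH0 sc \<Delta>. \<phi> (sc a x) = a * \<phi> x)
                  \<and> (\<forall>x. x \<notin> coHH0 sc \<Delta> \<longrightarrow> \<phi> x = 0)},
      mult = (\<lambda>\<phi> \<psi> c. \<phi> c + \<psi> c),
      one = (\<lambda>_. 0)\<rparr>"

definition cotr_data :: "('k::comm_ring_1 \<Rightarrow> 'c::ab_group_add \<Rightarrow> 'c) \<Rightarrow> ('c \<Rightarrow> ('c \<times> 'c) list)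
    \<Rightarrow> nat \<Rightarrow> (nat \<Rightarrow> 'c) set \<Rightarrow> nat \<Rightarrow> ((nat \<Rightarrow> 'c) \<Rightarrow> (nat \<Rightarrow> 'c)) \<Rightarrow> ((nat \<Rightarrow> 'c) \<Rightarrow> (nat \<Rightarrow> 'c)) \<Rightarrow> bool" where
  "cotr_data sc \<Delta> n M m i s \<longleftrightarrow>
     colinear sc \<Delta> n M m (Cn m) i \<and> inj_on i M
   \<and> colinear sc \<Delta> m (Cn m) n M s \<and> (\<forall>x\<in>M. s (i x) = x)"

text \<open>For g = i \<circ> f \<circ> s, f_c is the matrix with (j,l) entry \<epsilon>((g(c e_l))_j); its trace is
sum over l of \<epsilon>((g(c e_l))_l). Then cotr_M(f)(c) = sum \<epsilon>(c_(1)) tr(f_{c_(2)}) on coHH_0(C).\<close>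
definition cotr :: "('k::comm_ring_1 \<Rightarrow> 'c::ab_group_add \<Rightarrow> 'c) \<Rightarrow> ('c \<Rightarrow> ('c \<times> 'c) list) \<Rightarrow> ('c \<Rightarrow> 'k)
    \<Rightarrow> nat \<Rightarrow> ((nat \<Rightarrow> 'c) \<Rightarrow> (nat \<Rightarrow> 'c)) \<Rightarrow> ((nat \<Rightarrow> 'c) \<Rightarrow> (nat \<Rightarrow> 'c))
    \<Rightarrow> ((nat \<Rightarrow> 'c) \<Rightarrow> (nat \<Rightarrow> 'c)) \<Rightarrow> 'c \<Rightarrow> 'k" where
  "cotr sc \<Delta> \<epsilon> m i s f c =
     (if c \<in> coHH0 sc \<Delta> then
        sum_list (map (\<lambda>(u, v). \<epsilon> u * (\<Sum>l<m. \<epsilon> ((i (f (s (vins l v)))) l))) (\<Delta> c))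
      else 0)"

definition corank :: "('k::comm_ring_1 \<Rightarrow> 'c::ab_group_add \<Rightarrow> 'c) \<Rightarrow> ('c \<Rightarrow> ('c \<times> 'c) list) \<Rightarrow> ('c \<Rightarrow> 'k)
    \<Rightarrow> nat \<Rightarrow> ((nat \<Rightarrow> 'c) \<Rightarrow> (nat \<Rightarrow> 'c)) \<Rightarrow> ((nat \<Rightarrow> 'c) \<Rightarrow> (nat \<Rightarrow> 'c)) \<Rightarrow> 'c \<Rightarrow> 'k" where
  "corank sc \<Delta> \<epsilon> m i s = cotr sc \<Delta> \<epsilon> m i s id"

end

theory Submission
  imports Defs "HOL-Library.Multiset"
begin

(* The corank of M, computed from admissible data (i, s) exhibiting M as a retract of C^m, is the
   cotrace c |-> sum_l eps((i s)(c e_l)_l) of the idempotent i s of C^m.  On coHH_0(C) the cotrace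
   is symmetric, cotr(B A) = cotr(A B) for colinear A : C^m -> C^m' and B : C^m' -> C^m, because
   both sides evaluate one balanced bilinear form on Delta(c) and on its flip.  Applied to
   A = i' s and B = i s' this shows that the corank does not depend on the data; it is then
   invariant under isomorphism, additive on direct sums, zero on the zero object and k-linear on
   coHH_0(C), hence it descends along the group completion to a homomorphism
   K_0^c(C) -> coHH_0(C)^*. *)

section \<open>Calculus of the tensor-product relation\<close>

lemma tensor_eq_refl: "tensor_eq sa sb L L"
  unfolding tensor_eq_def using tz0 by simp

lemma tensor_eq_sym: "tensor_eq sa sb A B \<Longrightarrow> tensor_eq sa sb B A"
  unfolding tensor_eq_def using tzuminus by fastforce

lemma tensor_eq_trans [trans]: "tensor_eq sa sb A B \<Longrightarrow> tensor_eq sa sb B C \<Longrightarrow> tensor_eq sa sb A C"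
  unfolding tensor_eq_def using tzplus by fastforce

lemma tensor_eq_append:
  "tensor_eq sa sb A B \<Longrightarrow> tensor_eq sa sb C D \<Longrightarrow> tensor_eq sa sb (A @ C) (B @ D)"
  unfolding tensor_eq_def by (drule (1) tzplus) (simp add: algebra_simps)

lemma tensor_eq_append_cancel: "tensor_eq sa sb (A @ C) (B @ C) \<Longrightarrow> tensor_eq sa sb A B"
  unfolding tensor_eq_def by simp

lemma tensor_eq_if_count_list_eq: "(\<And>q. count_list A q = count_list B q) \<Longrightarrow> tensor_eq sa sb A B"
  unfolding tensor_eq_def using tz0 by simp

lemma sum_list_map_eq_if_count_list_eq:
  assumes "\<And>q. count_list A q = count_list B q"
  shows "sum_list (map h A) = (sum_list (map h B) :: 'g::comm_monoid_add)"
proof -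
  have "mset A = mset B" using assms by (simp add: multiset_eq_iff count_mset)
  then show ?thesis by (metis mset_map sum_mset_sum_list)
qed

definition add_subgroup :: "'g::ab_group_add set \<Rightarrow> bool" where
  "add_subgroup G \<longleftrightarrow> 0 \<in> G \<and> (\<forall>x\<in>G. \<forall>y\<in>G. x + y \<in> G) \<and> (\<forall>x\<in>G. - x \<in> G)"

lemma add_subgroup_tzero: "add_subgroup (tzero sa sb)"
  unfolding add_subgroup_def zero_fun_def plus_fun_def fun_Compl_def by (auto intro: tzero.intros)

text \<open>Writing relations as differences of counting functions of lists avoids integer
  multiples in the group of values.\<close>
lemma tzero_count_list_diff:
  assumes f: "f \<in> tzero sa sb" and G: "add_subgroup G"
    and h_addl: "\<And>x x' y. h (x + x', y) - h (x, y) - h (x', y) \<in> G"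
    and h_addr: "\<And>x y y'. h (x, y + y') - h (x, y) - h (x, y') \<in> G"
    and h_bal: "\<And>a x y. h (sa a x, y) - h (x, sb a y) \<in> G"
  shows "\<exists>P N. f = (\<lambda>q. int (count_list P q) - int (count_list N q))
               \<and> sum_list (map h P) - sum_list (map h N) \<in> G"
  using f
proof (induction rule: tzero.induct)
  case tz0
  show ?case using G by (intro exI[of _ "[]"]) (simp add: add_subgroup_def)
next
  case (tzaddl x x' y)
  show ?case using h_addl[of x x' y]
    by (intro exI[of _ "[(x + x', y)]"] exI[of _ "[(x, y), (x', y)]"])
      (auto simp: delta_def fun_eq_iff algebra_simps)
next
  case (tzaddr x y y')
  show ?case using h_addr[of x y y']
    by (intro exI[of _ "[(x, y + y')]"] exI[of _ "[(x, y), (x, y')]"])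
      (auto simp: delta_def fun_eq_iff algebra_simps)
next
  case (tzbal a x y)
  show ?case using h_bal[of a x y]
    by (intro exI[of _ "[(sa a x, y)]"] exI[of _ "[(x, sb a y)]"]) (auto simp: delta_def fun_eq_iff)
next
  case (tzplus f g)
  then obtain P N P' N' where
    "f = (\<lambda>q. int (count_list P q) - int (count_list N q))" "sum_list (map h P) - sum_list (map h N) \<in> G"
    "g = (\<lambda>q. int (count_list P' q) - int (count_list N' q))" "sum_list (map h P') - sum_list (map h N') \<in> G"
    by blast
  moreover have "(\<lambda>q. f q + g q) = (\<lambda>q. int (count_list (P @ P') q) - int (count_list (N @ N') q))"
    using calculation by (simp add: fun_eq_iff)
  moreover have "sum_list (map h (P @ P')) - sum_list (map h (N @ N'))
      = (sum_list (map h P) - sum_list (map h N)) + (sum_list (map h P') - sum_list (map h N'))"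
    by simp
  ultimately show ?case using G unfolding add_subgroup_def by metis
next
  case (tzuminus f)
  then obtain P N where
    "f = (\<lambda>q. int (count_list P q) - int (count_list N q))" "sum_list (map h P) - sum_list (map h N) \<in> G"
    by blast
  with G show ?case
    by (intro exI[of _ N] exI[of _ P]) (auto simp: add_subgroup_def)
qed

lemma tensor_eq_sum_list_diff_mem:
  assumes "tensor_eq sa sb L1 L2" and G: "add_subgroup G"
    and "\<And>x x' y. h (x + x', y) - h (x, y) - h (x', y) \<in> G"
    and "\<And>x y y'. h (x, y + y') - h (x, y) - h (x, y') \<in> G"
    and "\<And>a x y. h (sa a x, y) - h (x, sb a y) \<in> G"
  shows "sum_list (map h L1) - sum_list (map h L2) \<in> G"
proof -
  obtain P N where PN: "(\<lambda>q. int (count_list L1 q) - int (count_list L2 q))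
      = (\<lambda>q. int (count_list P q) - int (count_list N q))"
    and mem: "sum_list (map h P) - sum_list (map h N) \<in> G"
    using tzero_count_list_diff[OF assms(1)[unfolded tensor_eq_def] assms(2-)] by blast
  have "count_list (L1 @ N) q = count_list (P @ L2) q" for q
    using fun_cong[OF PN, of q] by simp
  then have "sum_list (map h (L1 @ N)) = sum_list (map h (P @ L2))"
    by (rule sum_list_map_eq_if_count_list_eq)
  then have "sum_list (map h L1) - sum_list (map h L2) = sum_list (map h P) - sum_list (map h N)"
    by (simp add: algebra_simps)
  with mem show ?thesis by simp
qed

lemma tensor_eq_sum_list_map_eq:
  fixes h :: "_ \<Rightarrow> 'g::ab_group_add"
  assumes "tensor_eq sa sb L1 L2"
    and "\<And>x x' y. h (x + x', y) = h (x, y) + h (x', y)"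
    and "\<And>x y y'. h (x, y + y') = h (x, y) + h (x, y')"
    and "\<And>a x y. h (sa a x, y) = h (x, sb a y)"
  shows "sum_list (map h L1) = sum_list (map h L2)"
  using tensor_eq_sum_list_diff_mem[OF assms(1), of "{0}" h] assms(2-)
  by (simp add: add_subgroup_def)

lemma tensor_eq_map:
  assumes "tensor_eq sa sb L1 L2"
    and "\<And>x x' y. (\<lambda>q. delta (F (x + x', y)) q - delta (F (x, y)) q - delta (F (x', y)) q) \<in> tzero sa' sb'"
    and "\<And>x y y'. (\<lambda>q. delta (F (x, y + y')) q - delta (F (x, y)) q - delta (F (x, y')) q) \<in> tzero sa' sb'"
    and "\<And>a x y. (\<lambda>q. delta (F (sa a x, y)) q - delta (F (x, sb a y)) q) \<in> tzero sa' sb'"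
  shows "tensor_eq sa' sb' (map F L1) (map F L2)"
proof -
  have count: "sum_list (map (\<lambda>p. delta (F p)) L) = (\<lambda>q. int (count_list (map F L) q))" for L
    by (induction L) (auto simp: delta_def fun_eq_iff)
  have "sum_list (map (\<lambda>p. delta (F p)) L1) - sum_list (map (\<lambda>p. delta (F p)) L2) \<in> tzero sa' sb'"
    by (rule tensor_eq_sum_list_diff_mem[OF assms(1) add_subgroup_tzero])
      (use assms(2-) in \<open>simp_all add: fun_diff_def\<close>)
  then show ?thesis unfolding tensor_eq_def count by (simp add: fun_diff_def)
qed

lemma tensor_eq_map_prod:
  assumes "tensor_eq sa sb L1 L2"
    and "\<And>x x'. F1 (x + x') = F1 x + F1 x'" and "\<And>y y'. F2 (y + y') = F2 y + F2 y'"
    and "\<And>a x. F1 (sa a x) = sa' a (F1 x)" and "\<And>a y. F2 (sb a y) = sb' a (F2 y)"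
  shows "tensor_eq sa' sb' (map (\<lambda>(x, y). (F1 x, F2 y)) L1) (map (\<lambda>(x, y). (F1 x, F2 y)) L2)"
  by (rule tensor_eq_map[OF assms(1)]) (simp_all add: assms tzaddl tzaddr tzbal)

lemma tensor_eq_map_snd:
  assumes "tensor_eq sa sb L1 L2"
    and "\<And>y y'. F (y + y') = F y + F y'" and "\<And>a y. F (sb a y) = sb' a (F y)"
  shows "tensor_eq sa sb' (map (\<lambda>(u, y). (u, F y)) L1) (map (\<lambda>(u, y). (u, F y)) L2)"
  using tensor_eq_map_prod[OF assms(1), of id F sa sb'] assms(2,3) by simp

lemma tensor_eq_swap:
  assumes "tensor_eq sa sa L1 L2"
  shows "tensor_eq sa sa (map (\<lambda>(u, v). (v, u)) L1) (map (\<lambda>(u, v). (v, u)) L2)"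
proof (rule tensor_eq_map[OF assms])
  fix a x y
  have "(\<lambda>q. - (delta (sa a y, x) q - delta (y, sa a x) q)) \<in> tzero sa sa"
    by (rule tzuminus[OF tzbal])
  then show "(\<lambda>q. delta (case (sa a x, y) of (u, v) \<Rightarrow> (v, u)) q
      - delta (case (x, sa a y) of (u, v) \<Rightarrow> (v, u)) q) \<in> tzero sa sa"
    by simp
qed (simp_all add: tzaddl tzaddr)

lemma tensor_eq_concat_map:
  "(\<And>p. p \<in> set L \<Longrightarrow> tensor_eq sa sb (F p) (G p))
    \<Longrightarrow> tensor_eq sa sb (concat (map F L)) (concat (map G L))"
  by (induction L) (auto intro: tensor_eq_append tensor_eq_refl)

lemma tensor_eq_map_pointwise:
  assumes "\<And>p. p \<in> set L \<Longrightarrow> tensor_eq sa sb [F p] [G p]"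
  shows "tensor_eq sa sb (map F L) (map G L)"
proof -
  have "tensor_eq sa sb (concat (map (\<lambda>p. [F p]) L)) (concat (map (\<lambda>p. [G p]) L))"
    by (rule tensor_eq_concat_map) (rule assms)
  then show ?thesis by simp
qed

lemma tensor_eq_bal: "tensor_eq sa sb [(sa a x, y)] [(x, sb a y)]"
proof -
  have "(\<lambda>q. int (count_list [(sa a x, y)] q) - int (count_list [(x, sb a y)] q))
      = (\<lambda>q. delta (sa a x, y) q - delta (x, sb a y) q)"
    by (auto simp: delta_def fun_eq_iff)
  then show ?thesis unfolding tensor_eq_def using tzbal by simp
qed

lemma tensor_eq_addr: "tensor_eq sa sb [(x, y + y')] [(x, y), (x, y')]"
proof -
  have "(\<lambda>q. int (count_list [(x, y + y')] q) - int (count_list [(x, y), (x, y')] q))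
      = (\<lambda>q. delta (x, y + y') q - delta (x, y) q - delta (x, y') q)"
    by (auto simp: delta_def fun_eq_iff)
  then show ?thesis unfolding tensor_eq_def using tzaddr by simp
qed

lemma tensor_eq_zero_right: "tensor_eq sa sb [(x, 0)] []"
  using tensor_eq_addr[of sa sb x 0 0] tensor_eq_append_cancel[of sa sb "[]" "[(x, 0)]" "[(x, 0)]"]
  by (simp add: tensor_eq_sym)

lemma tensor_eq_map_zero_right:
  assumes "\<And>p. p \<in> set L \<Longrightarrow> snd (F p) = 0"
  shows "tensor_eq sa sb (map F L) []"
proof -
  have "tensor_eq sa sb (concat (map (\<lambda>p. [F p]) L)) (concat (map (\<lambda>_. []) L))"
    by (rule tensor_eq_concat_map) (metis assms prod.collapse tensor_eq_zero_right)
  then show ?thesis by (simp add: map_replicate_const)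
qed

lemma tensor_eq_map_add_right:
  "tensor_eq sa sb (map (\<lambda>p. (F p, G1 p + G2 p)) L) (map (\<lambda>p. (F p, G1 p)) L @ map (\<lambda>p. (F p, G2 p)) L)"
proof -
  have "tensor_eq sa sb (concat (map (\<lambda>p. [(F p, G1 p + G2 p)]) L))
      (concat (map (\<lambda>p. [(F p, G1 p), (F p, G2 p)]) L))"
    by (rule tensor_eq_concat_map) (rule tensor_eq_addr)
  moreover have "tensor_eq sa sb (concat (map (\<lambda>p. [(F p, G1 p), (F p, G2 p)]) L))
      (map (\<lambda>p. (F p, G1 p)) L @ map (\<lambda>p. (F p, G2 p)) L)"
    by (rule tensor_eq_if_count_list_eq) (induction L, simp_all)
  ultimately show ?thesis by (simp add: map_concat tensor_eq_trans)
qed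

lemma sum_fun_apply: "(sum f S :: 'a \<Rightarrow> 'g::comm_monoid_add) j = (\<Sum>i\<in>S. f i j)"
  by (induction S rule: infinite_finite_induct) simp_all

lemma sum_list_fun_apply: "(sum_list (map f L) :: 'a \<Rightarrow> 'g::monoid_add) j = sum_list (map (\<lambda>p. f p j) L)"
  by (induction L) simp_all

lemma sum_sum_list_swap: "(\<Sum>k\<in>K. sum_list (map (f k) L)) = sum_list (map (\<lambda>p. \<Sum>k\<in>K. f k p) L)"
  by (induction L) (simp_all add: sum.distrib)

lemma sum_list_map_upt: "sum_list (map f [0..<n]) = (\<Sum>i<n. f i)"
  by (simp add: sum_set_upt_conv_sum_list_nat[symmetric] atLeast0LessThan)

lemma sum_list_map_concat: "sum_list (map h (concat xss)) = sum_list (map (\<lambda>xs. sum_list (map h xs)) xss)"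
  by (induction xss) simp_all

lemma sum_lessThan_add: "(\<Sum>l<n1 + (n2::nat). f l) = (\<Sum>l<n1. f l) + (\<Sum>l<n2. f (n1 + l))"
  by (induction n2) (simp_all add: algebra_simps)

section \<open>Coalgebras and cofree comodules\<close>

locale k_coalgebra =
  fixes sc :: "'k::comm_ring_1 \<Rightarrow> 'c::ab_group_add \<Rightarrow> 'c"
    and \<Delta> :: "'c \<Rightarrow> ('c \<times> 'c) list"
    and \<epsilon> :: "'c \<Rightarrow> 'k"
  assumes coalgebra: "coalgebra sc \<Delta> \<epsilon>"
begin

lemma
  shows sc_add: "sc a (x + y) = sc a x + sc a y"
    and sc_add_left: "sc (a + b) x = sc a x + sc b x"
    and sc_mult: "sc a (sc b x) = sc (a * b) x"
    and sc_one [simp]: "sc 1 x = x"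
    and eps_add: "\<epsilon> (x + y) = \<epsilon> x + \<epsilon> y"
    and eps_sc: "\<epsilon> (sc a x) = a * \<epsilon> x"
    and Delta_add: "tensor_eq sc sc (\<Delta> (x + y)) (\<Delta> x @ \<Delta> y)"
    and Delta_sc: "tensor_eq sc sc (\<Delta> (sc a x)) (map (\<lambda>(u, v). (sc a u, v)) (\<Delta> x))"
    and counit_left: "sum_list (map (\<lambda>(u, v). sc (\<epsilon> u) v) (\<Delta> c)) = c"
    and counit_right: "sum_list (map (\<lambda>(u, v). sc (\<epsilon> v) u) (\<Delta> c)) = c"
  using coalgebra unfolding coalgebra_def by simp_all

lemma sc_zero [simp]: "sc a 0 = 0"
  using sc_add[of a 0 0] by simp

lemma sc_zero_left [simp]: "sc 0 x = 0"
  using sc_add_left[of 0 0 x] by simp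

lemma eps_zero [simp]: "\<epsilon> 0 = 0"
  using eps_add[of 0 0] by simp

lemma sc_commute: "sc a (sc b x) = sc b (sc a x)"
  by (simp add: sc_mult mult.commute)

lemma eps_sum_list: "\<epsilon> (sum_list (map f L)) = sum_list (map (\<lambda>p. \<epsilon> (f p)) L)"
  by (induction L) (simp_all add: eps_add)

lemma eps_sum: "\<epsilon> (sum f S) = (\<Sum>i\<in>S. \<epsilon> (f i))"
  by (induction S rule: infinite_finite_induct) (simp_all add: eps_add)

lemma Delta_zero: "tensor_eq sc sc (\<Delta> 0) []"
  using Delta_add[of 0 0] tensor_eq_append_cancel[of sc sc "[]" "\<Delta> 0" "\<Delta> 0"]
  by (simp add: tensor_eq_sym)

lemma vadd_eq [simp]: "vadd x y = x + y"
  by (simp add: vadd_def plus_fun_def)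

lemma vzero_eq [simp]: "vzero = 0"
  by (simp add: vzero_def zero_fun_def)

lemma vscale_apply [simp]: "vscale sc a x i = sc a (x i)"
  by (simp add: vscale_def)

lemma vins_apply: "vins l v j = (if j = l then v else 0)"
  by (simp add: vins_def)

lemma vins_add: "vins l (u + v) = vins l u + vins l v"
  by (simp add: vins_def fun_eq_iff)

lemma vins_zero [simp]: "vins l 0 = 0"
  by (simp add: vins_def fun_eq_iff)

lemma vins_sc: "vins l (sc a v) = vscale sc a (vins l v)"
  by (simp add: vins_def fun_eq_iff)

lemma vins_sum_list: "vins k (sum_list (map f L)) = sum_list (map (\<lambda>p. vins k (f p)) L)"
  by (induction L) (simp_all add: vins_add)

lemma Cn_add: "x \<in> Cn n \<Longrightarrow> y \<in> Cn n \<Longrightarrow> x + y \<in> Cn n"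
  by (simp add: Cn_def)

lemma Cn_zero [simp]: "0 \<in> Cn n"
  by (simp add: Cn_def)

lemma Cn_vscale: "x \<in> Cn n \<Longrightarrow> vscale sc a x \<in> Cn n"
  by (simp add: Cn_def)

lemma Cn_vins: "l < n \<Longrightarrow> vins l v \<in> Cn n"
  by (simp add: Cn_def vins_def)

lemma Cn_sum_list: "(\<And>p. p \<in> set L \<Longrightarrow> f p \<in> Cn n) \<Longrightarrow> sum_list (map f L) \<in> Cn n"
  by (induction L) (auto intro: Cn_add)

lemma Cn_eq_sum_vins: "x \<in> Cn n \<Longrightarrow> x = (\<Sum>k<n. vins k (x k))"
  by (auto simp: fun_eq_iff sum_fun_apply vins_apply Cn_def)

definition klinear_on :: "(nat \<Rightarrow> 'c) set \<Rightarrow> ((nat \<Rightarrow> 'c) \<Rightarrow> (nat \<Rightarrow> 'c)) \<Rightarrow> bool" where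
  "klinear_on S F \<longleftrightarrow> (\<forall>x\<in>S. \<forall>y\<in>S. F (x + y) = F x + F y)
                     \<and> (\<forall>a. \<forall>x\<in>S. F (vscale sc a x) = vscale sc a (F x))"

lemma colinear_klinear_on: "colinear sc \<Delta> n A m B f \<Longrightarrow> klinear_on A f"
  unfolding colinear_def klinear_on_def by simp

lemma klinear_on_zero: "klinear_on S F \<Longrightarrow> 0 \<in> S \<Longrightarrow> F 0 = 0"
  unfolding klinear_on_def by (metis add_cancel_left_right add_0)

lemma klinear_on_vscale: "klinear_on S F \<Longrightarrow> x \<in> S \<Longrightarrow> F (vscale sc a x) = vscale sc a (F x)"
  unfolding klinear_on_def by blast

lemma klinear_on_sum_list:
  assumes "klinear_on (Cn n) F" "\<And>p. p \<in> set L \<Longrightarrow> f p \<in> Cn n"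
  shows "F (sum_list (map f L)) = sum_list (map (\<lambda>p. F (f p)) L)"
  using assms(2)
proof (induction L)
  case Nil
  then show ?case using klinear_on_zero[OF assms(1) Cn_zero] by (simp add: zero_fun_def)
next
  case (Cons x L)
  then have "f x \<in> Cn n" "sum_list (map f L) \<in> Cn n" by (auto intro: Cn_sum_list)
  then have "F (f x + sum_list (map f L)) = F (f x) + F (sum_list (map f L))"
    using assms(1) unfolding klinear_on_def by blast
  moreover have "F (sum_list (map f L)) = sum_list (map (\<lambda>p. F (f p)) L)"
    using Cons.IH Cons.prems by simp
  ultimately show ?case by (simp only: list.map sum_list.Cons)
qed

lemma klinear_on_sum_lessThan:
  assumes "klinear_on (Cn n) F" "\<And>i. i < m \<Longrightarrow> f i \<in> Cn n"
  shows "F (\<Sum>i<m. f i) = (\<Sum>i<(m::nat). F (f i))"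
  using klinear_on_sum_list[OF assms(1), of "[0..<m]" f] assms(2) by (simp add: sum_list_map_upt)

lemma set_coact: "p \<in> set (coact \<Delta> n x) \<Longrightarrow> snd p \<in> Cn n"
  by (auto simp: coact_def Cn_vins)

lemma sum_list_coact:
  "sum_list (map h (coact \<Delta> n z)) = (\<Sum>i<n. sum_list (map (\<lambda>(u, v). h (u, vins i v)) (\<Delta> (z i))))"
  unfolding coact_def by (simp add: sum_list_map_concat comp_def sum_list_map_upt case_prod_unfold)

lemma coact_vins:
  assumes "l < n"
  shows "tensor_eq sc (vscale sc) (coact \<Delta> n (vins l c)) (map (\<lambda>(u, v). (u, vins l v)) (\<Delta> c))"
proof -
  define blk where "blk i = (if i = l then map (\<lambda>(u, v). (u, vins l v)) (\<Delta> c) else [])" for i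
  have "tensor_eq sc (vscale sc) (coact \<Delta> n (vins l c)) (concat (map blk [0..<n]))"
    unfolding coact_def
  proof (rule tensor_eq_concat_map)
    fix i
    have "tensor_eq sc (vscale sc) (map (\<lambda>(u, v). (u, vins i v)) (\<Delta> 0)) (map (\<lambda>(u, v). (u, vins i v)) [])"
      by (rule tensor_eq_map_snd[OF Delta_zero]) (simp_all add: vins_add vins_sc)
    then show "tensor_eq sc (vscale sc) (map (\<lambda>(u, v). (u, vins i v)) (\<Delta> (vins l c i))) (blk i)"
      by (simp add: blk_def vins_apply tensor_eq_refl)
  qed
  moreover have "concat (map blk [0..<n]) = map (\<lambda>(u, v). (u, vins l v)) (\<Delta> c)"
  proof -
    have split: "[0..<n] = [0..<l] @ [l] @ [Suc l..<n]"
      using assms upt_add_eq_append[of 0 l "n - l"] upt_conv_Cons[of l n] by simp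
    have "concat (map blk [0..<l]) = []" "concat (map blk [Suc l..<n]) = []"
      by (auto simp: blk_def)
    moreover have "blk l = map (\<lambda>(u, v). (u, vins l v)) (\<Delta> c)" by (simp add: blk_def)
    ultimately show ?thesis
      unfolding split by (simp only: map_append concat_append list.map concat.simps append_Nil append_Nil2)
  qed
  ultimately show ?thesis by simp
qed

lemma subcomodule_Cn: "subcomodule sc \<Delta> n (Cn n)"
  unfolding subcomodule_def
proof (intro conjI ballI allI)
  fix x :: "nat \<Rightarrow> 'c"
  have "set (coact \<Delta> n x) \<subseteq> UNIV \<times> Cn n" using set_coact by force
  then show "\<exists>L. set L \<subseteq> UNIV \<times> Cn n \<and> tensor_eq sc (vscale sc) L (coact \<Delta> n x)"
    using tensor_eq_refl by blast
qed (auto simp: Cn_add Cn_vscale)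

lemma subcomodule_subset_Cn: "subcomodule sc \<Delta> n M \<Longrightarrow> M \<subseteq> Cn n"
  by (simp add: subcomodule_def)

lemma colinear_id: "colinear sc \<Delta> n A n A (\<lambda>x. x)"
  unfolding colinear_def by simp

lemma colinear_mono: "colinear sc \<Delta> n A m B f \<Longrightarrow> B \<subseteq> B' \<Longrightarrow> colinear sc \<Delta> n A m B' f"
  unfolding colinear_def by blast

lemma colinear_inclusion: "subcomodule sc \<Delta> n M \<Longrightarrow> colinear sc \<Delta> n M n (Cn n) (\<lambda>x. x)"
  using colinear_mono[OF colinear_id subcomodule_subset_Cn] by blast

lemma colinear_comp:
  assumes f: "colinear sc \<Delta> n A m B f" and g: "colinear sc \<Delta> m B p D g"
  shows "colinear sc \<Delta> n A p D (\<lambda>x. g (f x))"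
  unfolding colinear_def
proof (intro conjI ballI allI impI)
  fix x L assume x: "x \<in> A" and L: "set L \<subseteq> UNIV \<times> A \<and> tensor_eq sc (vscale sc) L (coact \<Delta> n x)"
  have "tensor_eq sc (vscale sc) (map (\<lambda>(u, y). (u, f y)) L) (coact \<Delta> m (f x))"
    using f x L unfolding colinear_def by blast
  moreover have "set (map (\<lambda>(u, y). (u, f y)) L) \<subseteq> UNIV \<times> B"
    using L f unfolding colinear_def by auto
  ultimately have "tensor_eq sc (vscale sc) (map (\<lambda>(u, y). (u, g y)) (map (\<lambda>(u, y). (u, f y)) L))
      (coact \<Delta> p (g (f x)))"
    using g f x unfolding colinear_def by blast
  then show "tensor_eq sc (vscale sc) (map (\<lambda>(u, y). (u, g (f y))) L) (coact \<Delta> p (g (f x)))"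
    by (simp add: case_prod_unfold comp_def)
qed (use f g in \<open>auto simp: colinear_def\<close>)

section \<open>The cotrace of colinear endomorphisms of cofree comodules\<close>

text \<open>A colinear map into a cofree comodule is recovered from its composite with the counit.\<close>
lemma colinear_apply_eq:
  assumes g: "colinear sc \<Delta> n A n' B g" and B: "B \<subseteq> Cn n'" and x: "x \<in> A"
    and L: "set L \<subseteq> UNIV \<times> A" "tensor_eq sc (vscale sc) L (coact \<Delta> n x)"
  shows "g x j = sum_list (map (\<lambda>(u, y). sc (\<epsilon> (g y j)) u) L)"
proof -
  define h where "h = (\<lambda>(u::'c, y::nat \<Rightarrow> 'c). sc (\<epsilon> (y j)) u)"
  have gx: "g x \<in> Cn n'" using g x B unfolding colinear_def by blast
  have "tensor_eq sc (vscale sc) (map (\<lambda>(u, y). (u, g y)) L) (coact \<Delta> n' (g x))"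
    using g x L unfolding colinear_def by blast
  then have "sum_list (map h (map (\<lambda>(u, y). (u, g y)) L)) = sum_list (map h (coact \<Delta> n' (g x)))"
    by (rule tensor_eq_sum_list_map_eq)
      (simp_all add: h_def eps_add sc_add_left sc_add eps_sc sc_mult mult.commute)
  also have "\<dots> = (\<Sum>i<n'. if i = j then g x j else 0)"
    unfolding sum_list_coact
    by (rule sum.cong[OF refl])
      (auto simp: h_def vins_apply counit_right[unfolded case_prod_unfold] case_prod_unfold
        intro: sum_list_0)
  also have "\<dots> = g x j" using gx by (auto simp: Cn_def)
  finally show ?thesis by (simp add: h_def case_prod_unfold comp_def)
qed

text \<open>The \<open>(j, l)\<close> entry of the matrix \<open>F\<^sub>v\<close> attached to \<open>F\<close> under
  \<open>End(C \<otimes> k\<^sup>n) \<cong> Hom(C, M\<^sub>n(k))\<close>.\<close>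
definition entry :: "((nat \<Rightarrow> 'c) \<Rightarrow> (nat \<Rightarrow> 'c)) \<Rightarrow> nat \<Rightarrow> nat \<Rightarrow> 'c \<Rightarrow> 'k" where
  "entry F j l v = \<epsilon> (F (vins l v) j)"

lemma entry_add: "klinear_on (Cn n) F \<Longrightarrow> l < n \<Longrightarrow> entry F j l (u + v) = entry F j l u + entry F j l v"
  unfolding entry_def klinear_on_def by (simp add: vins_add Cn_vins eps_add)

lemma entry_sc: "klinear_on (Cn n) F \<Longrightarrow> l < n \<Longrightarrow> entry F j l (sc a u) = a * entry F j l u"
  unfolding entry_def klinear_on_def by (simp add: vins_sc Cn_vins eps_sc)

lemma entry_sum_list:
  "klinear_on (Cn n) F \<Longrightarrow> l < n \<Longrightarrow> entry F j l (sum_list (map f L)) = sum_list (map (\<lambda>p. entry F j l (f p)) L)"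
  using entry_sc[of n F l j 0 0] by (induction L) (simp_all add: entry_add)

lemma colinear_vins_apply:
  assumes g: "colinear sc \<Delta> n (Cn n) n' B g" and B: "B \<subseteq> Cn n'" and l: "l < n"
  shows "g (vins l c) j = sum_list (map (\<lambda>p. sc (entry g j l (snd p)) (fst p)) (\<Delta> c))"
proof -
  have "g (vins l c) j = sum_list (map (\<lambda>(u, y). sc (\<epsilon> (g y j)) u) (map (\<lambda>(u, v). (u, vins l v)) (\<Delta> c)))"
    by (rule colinear_apply_eq[OF g B Cn_vins[OF l]])
      (auto simp: Cn_vins[OF l] coact_vins[OF l] tensor_eq_sym)
  then show ?thesis by (simp add: entry_def case_prod_unfold comp_def)
qed

text \<open>Entries of a composite: the matrix product, convolved along \<open>\<Delta>(c)\<close>.\<close>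
lemma eps_comp_vins:
  assumes A: "colinear sc \<Delta> m (Cn m) m' (Cn m') FA" and B: "klinear_on (Cn m') FB" and l: "l < m"
  shows "\<epsilon> (FB (FA (vins l c)) j)
    = sum_list (map (\<lambda>p. \<Sum>k<m'. entry FA k l (snd p) * entry FB j k (fst p)) (\<Delta> c))"
proof -
  define w where "w k = (\<lambda>p. vscale sc (entry FA k l (snd p)) (vins k (fst p)))" for k
  have w: "w k p \<in> Cn m'" if "k < m'" for k p
    using that by (simp add: w_def Cn_vscale Cn_vins)
  have "FA (vins l c) = (\<Sum>k<m'. vins k (FA (vins l c) k))"
    using A Cn_vins[OF l] by (intro Cn_eq_sum_vins) (auto simp: colinear_def)
  also have "\<dots> = (\<Sum>k<m'. sum_list (map (w k) (\<Delta> c)))"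
    by (simp add: colinear_vins_apply[OF A order_refl l] vins_sum_list vins_sc w_def)
  finally have "FB (FA (vins l c)) = (\<Sum>k<m'. sum_list (map (\<lambda>p. FB (w k p)) (\<Delta> c)))"
    using w by (simp add: klinear_on_sum_lessThan[OF B] klinear_on_sum_list[OF B] Cn_sum_list)
  moreover have "\<epsilon> (FB (w k p) j) = entry FA k l (snd p) * entry FB j k (fst p)" if "k < m'" for k p
    using that by (simp add: w_def klinear_on_vscale[OF B] Cn_vins eps_sc entry_def)
  ultimately show ?thesis
    by (simp add: sum_fun_apply sum_list_fun_apply eps_sum eps_sum_list sum_sum_list_swap)
qed

lemma coHH0_tensor_eq: "c \<in> coHH0 sc \<Delta> \<Longrightarrow> tensor_eq sc sc (\<Delta> c) (map (\<lambda>(u, v). (v, u)) (\<Delta> c))"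
  by (simp add: coHH0_def)

lemma cotrace_comp_commute:
  assumes A: "colinear sc \<Delta> m (Cn m) m' (Cn m') FA" and B: "colinear sc \<Delta> m' (Cn m') m (Cn m) FB"
    and c: "c \<in> coHH0 sc \<Delta>"
  shows "(\<Sum>l<m. \<epsilon> (FB (FA (vins l c)) l)) = (\<Sum>k<m'. \<epsilon> (FA (FB (vins k c)) k))"
proof -
  have LA: "klinear_on (Cn m) FA" and LB: "klinear_on (Cn m') FB"
    using A B by (simp_all add: colinear_klinear_on)
  define H where "H u v = (\<Sum>l<m. \<Sum>k<m'. entry FA k l v * entry FB l k u)" for u v
  have "(\<Sum>l<m. \<epsilon> (FB (FA (vins l c)) l)) = sum_list (map (\<lambda>p. H (fst p) (snd p)) (\<Delta> c))"
    by (simp add: eps_comp_vins[OF A LB] sum_sum_list_swap H_def)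
  also have "\<dots> = sum_list (map (\<lambda>p. H (fst p) (snd p)) (map (\<lambda>(u, v). (v, u)) (\<Delta> c)))"
    by (rule tensor_eq_sum_list_map_eq[OF coHH0_tensor_eq[OF c]])
      (simp_all add: H_def entry_add[OF LA] entry_add[OF LB] entry_sc[OF LA] entry_sc[OF LB]
        ring_distribs sum.distrib mult.assoc mult.left_commute)
  also have "\<dots> = (\<Sum>k<m'. \<epsilon> (FA (FB (vins k c)) k))"
    by (simp add: eps_comp_vins[OF B LA] sum_sum_list_swap H_def sum.swap[of _ "{..<m}"]
        mult.commute comp_def case_prod_unfold)
  finally show ?thesis .
qed

lemma cotr_eq:
  assumes "klinear_on (Cn m) (\<lambda>x. i (f (s x)))"
  shows "cotr sc \<Delta> \<epsilon> m i s f c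
    = (if c \<in> coHH0 sc \<Delta> then (\<Sum>l<m. \<epsilon> (i (f (s (vins l c))) l)) else 0)"
proof (cases "c \<in> coHH0 sc \<Delta>")
  case True
  let ?P = "\<lambda>x. i (f (s x))"
  have "cotr sc \<Delta> \<epsilon> m i s f c = sum_list (map (\<lambda>p. \<epsilon> (fst p) * (\<Sum>l<m. entry ?P l l (snd p))) (\<Delta> c))"
    using True by (simp add: cotr_def entry_def case_prod_unfold)
  also have "\<dots> = (\<Sum>l<m. entry ?P l l (sum_list (map (\<lambda>p. sc (\<epsilon> (fst p)) (snd p)) (\<Delta> c))))"
    by (simp add: sum_sum_list_swap sum_distrib_left entry_sc[OF assms] entry_sum_list[OF assms])
  also have "\<dots> = (\<Sum>l<m. entry ?P l l c)"
    using counit_left[of c] by (simp add: case_prod_unfold)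
  finally show ?thesis using True by (simp add: entry_def)
qed (simp add: cotr_def)

lemma cotr_data_colinear:
  "cotr_data sc \<Delta> n M m i s \<Longrightarrow> colinear sc \<Delta> m (Cn m) m (Cn m) (\<lambda>x. i (s x))"
  unfolding cotr_data_def by (blast intro: colinear_comp)

lemma corank_eq:
  assumes "cotr_data sc \<Delta> n M m i s"
  shows "corank sc \<Delta> \<epsilon> m i s c = (if c \<in> coHH0 sc \<Delta> then (\<Sum>l<m. \<epsilon> (i (s (vins l c)) l)) else 0)"
  unfolding corank_def
  using cotr_eq[of m i id s c] colinear_klinear_on[OF cotr_data_colinear[OF assms]] by simp

lemma corank_independent:
  assumes D: "cotr_data sc \<Delta> n M m i s" and D': "cotr_data sc \<Delta> n M m' i' s'"
  shows "corank sc \<Delta> \<epsilon> m i s = corank sc \<Delta> \<epsilon> m' i' s'"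
proof
  fix c
  have i: "colinear sc \<Delta> n M m (Cn m) i" and s: "colinear sc \<Delta> m (Cn m) n M s"
    and si: "\<forall>x\<in>M. s (i x) = x"
    using D unfolding cotr_data_def by auto
  have i': "colinear sc \<Delta> n M m' (Cn m') i'" and s': "colinear sc \<Delta> m' (Cn m') n M s'"
    and si': "\<forall>x\<in>M. s' (i' x) = x"
    using D' unfolding cotr_data_def by auto
  have "(\<Sum>l<m. \<epsilon> (i (s (vins l c)) l)) = (\<Sum>l<m. \<epsilon> (i (s' (i' (s (vins l c)))) l))"
    using s si' by (simp add: Cn_vins colinear_def)
  also have "\<dots> = (\<Sum>k<m'. \<epsilon> (i' (s (i (s' (vins k c)))) k))" if "c \<in> coHH0 sc \<Delta>"
    by (rule cotrace_comp_commute[OF colinear_comp[OF s i'] colinear_comp[OF s' i] that])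
  also have "\<dots> = (\<Sum>k<m'. \<epsilon> (i' (s' (vins k c)) k))"
    using s' si by (simp add: Cn_vins colinear_def)
  finally show "corank sc \<Delta> \<epsilon> m i s c = corank sc \<Delta> \<epsilon> m' i' s' c"
    by (simp add: corank_eq[OF D] corank_eq[OF D'])
qed

section \<open>Corank of finitely cogenerated injective comodules\<close>

lemma injective_comod_retraction:
  assumes "injective_comod sc \<Delta> n M"
  obtains r where "colinear sc \<Delta> n (Cn n) n M r" "\<And>x. x \<in> M \<Longrightarrow> r x = x"
proof -
  have "subcomodule sc \<Delta> n M" using assms by (simp add: injective_comod_def)
  then show ?thesis
    using assms that subcomodule_Cn subcomodule_subset_Cn colinear_id unfolding injective_comod_def by metis
qed

lemma cotr_data_retraction:
  assumes "valid_obj sc \<Delta> (n, M)"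
  obtains r where "cotr_data sc \<Delta> n M n (\<lambda>x. x) r"
proof -
  have M: "injective_comod sc \<Delta> n M" using assms by (simp add: valid_obj_def)
  obtain r where "colinear sc \<Delta> n (Cn n) n M r" "\<And>x. x \<in> M \<Longrightarrow> r x = x"
    using injective_comod_retraction[OF M] by blast
  with M have "cotr_data sc \<Delta> n M n (\<lambda>x. x) r"
    using colinear_inclusion unfolding cotr_data_def injective_comod_def by simp
  then show ?thesis by (rule that)
qed

definition trunc :: "nat \<Rightarrow> (nat \<Rightarrow> 'c) \<Rightarrow> (nat \<Rightarrow> 'c)" where
  "trunc n z = (\<lambda>i. if i < n then z i else 0)"

lemma trunc_add: "trunc n (x + y) = trunc n x + trunc n y"
  by (simp add: trunc_def fun_eq_iff)

lemma trunc_vscale: "trunc n (vscale sc a x) = vscale sc a (trunc n x)"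
  by (simp add: trunc_def fun_eq_iff)

lemma trunc_in_Cn: "trunc n x \<in> Cn n"
  by (simp add: trunc_def Cn_def)

lemma trunc_Cn: "x \<in> Cn n \<Longrightarrow> trunc n x = x"
  by (simp add: trunc_def Cn_def fun_eq_iff)

text \<open>Tensor equalities can only be transported along maps that are additive everywhere;
  injectivity of \<open>M\<close> supplies such an extension of a map that is linear on \<open>M\<close>.\<close>
lemma klinear_on_extension:
  assumes M: "injective_comod sc \<Delta> n M" and g: "klinear_on M g"
  obtains G where "klinear_on UNIV G" "\<And>x. x \<in> M \<Longrightarrow> G x = g x"
proof -
  obtain r where r: "colinear sc \<Delta> n (Cn n) n M r" "\<And>x. x \<in> M \<Longrightarrow> r x = x"
    using injective_comod_retraction[OF M] by blast
  have "M \<subseteq> Cn n" using M by (simp add: injective_comod_def subcomodule_def)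
  moreover have "klinear_on UNIV (\<lambda>z. g (r (trunc n z)))"
    using r(1) g unfolding klinear_on_def colinear_def
    by (simp add: trunc_add trunc_vscale trunc_in_Cn)
  moreover have "g (r (trunc n x)) = g x" if "x \<in> M" for x
    using that calculation(1) r(2) by (auto simp: trunc_Cn)
  ultimately show ?thesis using that by blast
qed

lemma klinear_on_inv_into:
  assumes f: "klinear_on M f" and bij: "bij_betw f M M'" and M: "subcomodule sc \<Delta> n M"
  shows "klinear_on M' (inv_into M f)"
proof -
  let ?g = "inv_into M f"
  have g: "?g y \<in> M" "f (?g y) = y" if "y \<in> M'" for y
    using that bij by (auto simp: bij_betw_def intro: inv_into_into f_inv_into_f)
  have gf: "?g (f x) = x" if "x \<in> M" for x
    using that bij by (simp add: bij_betw_def inv_into_f_f)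
  have "?g (x + y) = ?g x + ?g y" if "x \<in> M'" "y \<in> M'" for x y
    using that g gf[of "?g x + ?g y"] f M unfolding klinear_on_def subcomodule_def by auto
  moreover have "?g (vscale sc a x) = vscale sc a (?g x)" if "x \<in> M'" for a x
    using that g gf[of "vscale sc a (?g x)"] f M unfolding klinear_on_def subcomodule_def by auto
  ultimately show ?thesis unfolding klinear_on_def by blast
qed

lemma colinear_inv_into:
  assumes f: "colinear sc \<Delta> n M n' M' f" and bij: "bij_betw f M M'"
    and M: "subcomodule sc \<Delta> n M" and M': "injective_comod sc \<Delta> n' M'"
  shows "colinear sc \<Delta> n' M' n M (inv_into M f)"
proof -
  let ?g = "inv_into M f"
  have g: "?g y \<in> M" "f (?g y) = y" if "y \<in> M'" for y
    using that bij by (auto simp: bij_betw_def intro: inv_into_into f_inv_into_f)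
  have gf: "?g (f x) = x" "f x \<in> M'" if "x \<in> M" for x
    using that bij by (auto simp: bij_betw_def inv_into_f_f)
  have lin: "klinear_on M' ?g"
    by (rule klinear_on_inv_into[OF colinear_klinear_on[OF f] bij M])
  obtain G where G: "klinear_on UNIV G" "\<And>y. y \<in> M' \<Longrightarrow> G y = ?g y"
    using klinear_on_extension[OF M' lin] by blast
  have "tensor_eq sc (vscale sc) (map (\<lambda>(u, z). (u, ?g z)) L) (coact \<Delta> n (?g y))"
    if y: "y \<in> M'" and L: "set L \<subseteq> UNIV \<times> M'" "tensor_eq sc (vscale sc) L (coact \<Delta> n' y)" for y L
  proof -
    obtain L0 where L0: "set L0 \<subseteq> UNIV \<times> M" "tensor_eq sc (vscale sc) L0 (coact \<Delta> n (?g y))"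
      using M g(1)[OF y] unfolding subcomodule_def by blast
    have "tensor_eq sc (vscale sc) (map (\<lambda>(u, z). (u, f z)) L0) (coact \<Delta> n' (f (?g y)))"
      using f g(1)[OF y] L0 unfolding colinear_def by blast
    then have "tensor_eq sc (vscale sc) L (map (\<lambda>(u, z). (u, f z)) L0)"
      unfolding g(2)[OF y] by (rule tensor_eq_trans[OF L(2) tensor_eq_sym])
    then have "tensor_eq sc (vscale sc) (map (\<lambda>(u, z). (u, G z)) L)
        (map (\<lambda>(u, z). (u, G z)) (map (\<lambda>(u, z). (u, f z)) L0))"
      by (rule tensor_eq_map_snd) (use G(1) in \<open>simp_all add: klinear_on_def\<close>)
    moreover have "map (\<lambda>(u, z). (u, G z)) L = map (\<lambda>(u, z). (u, ?g z)) L"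
      using L(1) G(2) by (auto intro!: map_cong)
    moreover have "map (\<lambda>(u, z). (u, G z)) (map (\<lambda>(u, z). (u, f z)) L0) = L0"
      unfolding map_map by (rule map_idI) (use L0(1) G(2) gf in \<open>auto simp: case_prod_unfold\<close>)
    ultimately have "tensor_eq sc (vscale sc) (map (\<lambda>(u, z). (u, ?g z)) L) L0" by simp
    then show ?thesis using L0(2) by (rule tensor_eq_trans)
  qed
  with g(1) lin show ?thesis unfolding colinear_def klinear_on_def by simp
qed

definition obj_corank :: "'c cobj \<Rightarrow> 'c \<Rightarrow> 'k" where
  "obj_corank P = (let D = (SOME D. cotr_data sc \<Delta> (fst P) (snd P) (fst D) (fst (snd D)) (snd (snd D)))
                   in corank sc \<Delta> \<epsilon> (fst D) (fst (snd D)) (snd (snd D)))"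

lemma obj_corank_eq:
  assumes "cotr_data sc \<Delta> n M m i s"
  shows "obj_corank (n, M) = corank sc \<Delta> \<epsilon> m i s"
proof -
  let ?D = "SOME D. cotr_data sc \<Delta> n M (fst D) (fst (snd D)) (snd (snd D))"
  have "cotr_data sc \<Delta> n M (fst ?D) (fst (snd ?D)) (snd (snd ?D))"
    by (rule someI[of _ "(m, i, s)"]) (simp add: assms)
  then show ?thesis
    unfolding obj_corank_def using corank_independent[OF _ assms] by (simp add: Let_def)
qed

lemma obj_corank_iso:
  assumes P: "valid_obj sc \<Delta> (n, M)" and Q: "valid_obj sc \<Delta> (n', M')"
    and iso: "iso_obj sc \<Delta> (n, M) (n', M')"
  shows "obj_corank (n, M) = obj_corank (n', M')"
proof -
  obtain f where f: "colinear sc \<Delta> n M n' M' f" "bij_betw f M M'"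
    using iso by (auto simp: iso_obj_def)
  have M: "subcomodule sc \<Delta> n M" and M': "injective_comod sc \<Delta> n' M'"
    using P Q by (simp_all add: valid_obj_def injective_comod_def)
  obtain r where r: "cotr_data sc \<Delta> n' M' n' (\<lambda>x. x) r"
    using Q by (rule cotr_data_retraction)
  have r_into: "r x \<in> M'" if "x \<in> Cn n'" for x
    using r that by (simp add: cotr_data_def colinear_def)
  let ?g = "inv_into M f"
  have D: "cotr_data sc \<Delta> n M n' f (\<lambda>y. ?g (r y))"
    unfolding cotr_data_def
  proof (intro conjI)
    show "colinear sc \<Delta> n M n' (Cn n') f"
      using colinear_mono[OF f(1)] M' by (simp add: injective_comod_def subcomodule_subset_Cn)
    show "colinear sc \<Delta> n' (Cn n') n M (\<lambda>y. ?g (r y))"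
      using colinear_comp[OF _ colinear_inv_into[OF f M M']] r by (simp add: cotr_data_def)
    show "inj_on f M" "\<forall>x\<in>M. ?g (r (f x)) = x"
      using f(2) r by (auto simp: bij_betw_def cotr_data_def inv_into_f_f)
  qed
  have "f (?g (r (vins l c))) = r (vins l c)" if "l < n'" for l c
    using f(2) r_into[OF Cn_vins[OF that]] by (simp add: bij_betw_def f_inv_into_f)
  then have "corank sc \<Delta> \<epsilon> n' f (\<lambda>y. ?g (r y)) = corank sc \<Delta> \<epsilon> n' (\<lambda>x. x) r"
    by (simp add: fun_eq_iff corank_eq[OF D] corank_eq[OF r])
  then show ?thesis using obj_corank_eq[OF D] obj_corank_eq[OF r] by simp
qed

section \<open>Direct sums\<close>

definition join :: "nat \<Rightarrow> (nat \<Rightarrow> 'c) \<Rightarrow> (nat \<Rightarrow> 'c) \<Rightarrow> (nat \<Rightarrow> 'c)" where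
  "join k x y = (\<lambda>i. if i < k then x i else y (i - k))"

definition shift :: "nat \<Rightarrow> (nat \<Rightarrow> 'c) \<Rightarrow> (nat \<Rightarrow> 'c)" where
  "shift k z = (\<lambda>i. z (i + k))"

definition dsum_set :: "nat \<Rightarrow> (nat \<Rightarrow> 'c) set \<Rightarrow> (nat \<Rightarrow> 'c) set \<Rightarrow> (nat \<Rightarrow> 'c) set" where
  "dsum_set k M1 M2 = {join k x y | x y. x \<in> M1 \<and> y \<in> M2}"

lemma dsum_eq: "dsum (n1, M1) (n2, M2) = (n1 + n2, dsum_set n1 M1 M2)"
  unfolding dsum_def dsum_set_def join_def prod.sel ..

lemma join_add: "join k x y + join k x' y' = join k (x + x') (y + y')"
  by (simp add: join_def fun_eq_iff)

lemma join_vscale: "vscale sc a (join k x y) = join k (vscale sc a x) (vscale sc a y)"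
  by (simp add: join_def fun_eq_iff)

lemma join_in_Cn: "x \<in> Cn n1 \<Longrightarrow> y \<in> Cn n2 \<Longrightarrow> join n1 x y \<in> Cn (n1 + n2)"
  by (simp add: join_def Cn_def)

lemma trunc_join: "x \<in> Cn n1 \<Longrightarrow> trunc n1 (join n1 x y) = x"
  by (simp add: join_def trunc_def Cn_def fun_eq_iff)

lemma shift_join: "shift n1 (join n1 x y) = y"
  by (simp add: join_def shift_def fun_eq_iff)

lemma join_trunc_shift: "join n1 (trunc n1 z) (shift n1 z) = z"
  by (simp add: join_def trunc_def shift_def fun_eq_iff)

lemma shift_add: "shift k (x + y) = shift k x + shift k y"
  by (simp add: shift_def fun_eq_iff)

lemma shift_vscale: "shift k (vscale sc a x) = vscale sc a (shift k x)"
  by (simp add: shift_def fun_eq_iff)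

lemma coact_add_dim:
  "coact \<Delta> (n1 + n2) z = map (\<lambda>(u, w). (u, join n1 w 0)) (coact \<Delta> n1 (trunc n1 z))
                          @ map (\<lambda>(u, w). (u, join n1 0 w)) (coact \<Delta> n2 (shift n1 z))"
proof -
  let ?blk = "\<lambda>i. map (\<lambda>(u, v). (u, vins i v)) (\<Delta> (z i))"
  have "join n1 (vins i v) 0 = vins i v" if "i < n1" for i v
    using that by (simp add: join_def vins_def fun_eq_iff)
  then have left: "map (\<lambda>(u, w). (u, join n1 w 0)) (coact \<Delta> n1 (trunc n1 z)) = concat (map ?blk [0..<n1])"
    unfolding coact_def map_concat
    by (intro arg_cong[where f = concat] map_cong) (auto simp: trunc_def case_prod_unfold)
  have "join n1 0 (vins i v) = vins (i + n1) v" for i v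
    by (auto simp: join_def vins_def fun_eq_iff)
  then have right: "map (\<lambda>(u, w). (u, join n1 0 w)) (coact \<Delta> n2 (shift n1 z))
      = concat (map ?blk (map (\<lambda>i. i + n1) [0..<n2]))"
    unfolding coact_def map_concat
    by (intro arg_cong[where f = concat]) (auto simp: shift_def case_prod_unfold)
  have "[0..<n1 + n2] = [0..<n1] @ map (\<lambda>i. i + n1) [0..<n2]"
    using upt_add_eq_append[of 0 n1 n2] map_add_upt[of n1 n2] by (simp add: add.commute)
  then show ?thesis unfolding left right by (simp add: coact_def)
qed

lemma coact_trunc:
  "tensor_eq sc (vscale sc) (map (\<lambda>(u, w). (u, trunc n1 w)) (coact \<Delta> (n1 + n2) z))
     (coact \<Delta> n1 (trunc n1 z))"
proof -
  have "map (\<lambda>(u, w). (u, trunc n1 (join n1 w 0))) (coact \<Delta> n1 (trunc n1 z)) = coact \<Delta> n1 (trunc n1 z)"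
    by (rule map_idI) (auto simp: trunc_join dest: set_coact)
  then have "map (\<lambda>(u, w). (u, trunc n1 w)) (coact \<Delta> (n1 + n2) z)
      = coact \<Delta> n1 (trunc n1 z) @ map (\<lambda>(u, w). (u, 0)) (coact \<Delta> n2 (shift n1 z))"
    unfolding coact_add_dim by (simp add: trunc_join case_prod_unfold comp_def)
  moreover have "tensor_eq sc (vscale sc)
      (coact \<Delta> n1 (trunc n1 z) @ map (\<lambda>(u, w). (u, 0)) (coact \<Delta> n2 (shift n1 z)))
      (coact \<Delta> n1 (trunc n1 z) @ [])"
    by (intro tensor_eq_append tensor_eq_refl tensor_eq_map_zero_right) auto
  ultimately show ?thesis by simp
qed

lemma coact_shift:
  "tensor_eq sc (vscale sc) (map (\<lambda>(u, w). (u, shift n1 w)) (coact \<Delta> (n1 + n2) z))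
     (coact \<Delta> n2 (shift n1 z))"
proof -
  have "map (\<lambda>(u, w). (u, shift n1 w)) (coact \<Delta> (n1 + n2) z)
      = map (\<lambda>(u, w). (u, 0)) (coact \<Delta> n1 (trunc n1 z)) @ coact \<Delta> n2 (shift n1 z)"
    unfolding coact_add_dim by (simp add: shift_join case_prod_unfold comp_def)
  moreover have "tensor_eq sc (vscale sc)
      (map (\<lambda>(u, w). (u, 0)) (coact \<Delta> n1 (trunc n1 z)) @ coact \<Delta> n2 (shift n1 z))
      ([] @ coact \<Delta> n2 (shift n1 z))"
    by (intro tensor_eq_append tensor_eq_refl tensor_eq_map_zero_right) auto
  ultimately show ?thesis by simp
qed

lemma colinear_trunc:
  assumes "D \<subseteq> Cn (n1 + n2)" "\<And>z. z \<in> D \<Longrightarrow> trunc n1 z \<in> B1"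
  shows "colinear sc \<Delta> (n1 + n2) D n1 B1 (trunc n1)"
  unfolding colinear_def
proof (intro conjI ballI allI impI)
  fix z L assume "set L \<subseteq> UNIV \<times> D \<and> tensor_eq sc (vscale sc) L (coact \<Delta> (n1 + n2) z)"
  then have "tensor_eq sc (vscale sc) L (coact \<Delta> (n1 + n2) z)" ..
  then have "tensor_eq sc (vscale sc) (map (\<lambda>(u, w). (u, trunc n1 w)) L)
      (map (\<lambda>(u, w). (u, trunc n1 w)) (coact \<Delta> (n1 + n2) z))"
    by (rule tensor_eq_map_snd) (simp_all add: trunc_add trunc_vscale)
  then show "tensor_eq sc (vscale sc) (map (\<lambda>(u, y). (u, trunc n1 y)) L) (coact \<Delta> n1 (trunc n1 z))"
    using coact_trunc by (rule tensor_eq_trans)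
qed (use assms in \<open>auto simp: trunc_add trunc_vscale\<close>)

lemma colinear_shift:
  assumes "D \<subseteq> Cn (n1 + n2)" "\<And>z. z \<in> D \<Longrightarrow> shift n1 z \<in> B2"
  shows "colinear sc \<Delta> (n1 + n2) D n2 B2 (shift n1)"
  unfolding colinear_def
proof (intro conjI ballI allI impI)
  fix z L assume "set L \<subseteq> UNIV \<times> D \<and> tensor_eq sc (vscale sc) L (coact \<Delta> (n1 + n2) z)"
  then have "tensor_eq sc (vscale sc) L (coact \<Delta> (n1 + n2) z)" ..
  then have "tensor_eq sc (vscale sc) (map (\<lambda>(u, w). (u, shift n1 w)) L)
      (map (\<lambda>(u, w). (u, shift n1 w)) (coact \<Delta> (n1 + n2) z))"
    by (rule tensor_eq_map_snd) (simp_all add: shift_add shift_vscale)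
  then show "tensor_eq sc (vscale sc) (map (\<lambda>(u, y). (u, shift n1 y)) L) (coact \<Delta> n2 (shift n1 z))"
    using coact_shift by (rule tensor_eq_trans)
qed (use assms in \<open>auto simp: shift_add shift_vscale\<close>)

lemma tensor_eq_join:
  assumes "tensor_eq sc (vscale sc) L1 L1'" "tensor_eq sc (vscale sc) L2 L2'"
  shows "tensor_eq sc (vscale sc)
    (map (\<lambda>(u, w). (u, join k w 0)) L1 @ map (\<lambda>(u, w). (u, join k 0 w)) L2)
    (map (\<lambda>(u, w). (u, join k w 0)) L1' @ map (\<lambda>(u, w). (u, join k 0 w)) L2')"
proof (rule tensor_eq_append)
  show "tensor_eq sc (vscale sc) (map (\<lambda>(u, w). (u, join k w 0)) L1) (map (\<lambda>(u, w). (u, join k w 0)) L1')"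
    by (rule tensor_eq_map_snd[OF assms(1)]) (simp_all add: join_def fun_eq_iff)
  show "tensor_eq sc (vscale sc) (map (\<lambda>(u, w). (u, join k 0 w)) L2) (map (\<lambda>(u, w). (u, join k 0 w)) L2')"
    by (rule tensor_eq_map_snd[OF assms(2)]) (simp_all add: join_def fun_eq_iff)
qed

lemma colinear_join:
  assumes h1: "colinear sc \<Delta> p A n1 B1 h1" and h2: "colinear sc \<Delta> p A n2 B2 h2"
    and B1: "B1 \<subseteq> Cn n1"
  shows "colinear sc \<Delta> p A (n1 + n2) (dsum_set n1 B1 B2) (\<lambda>a. join n1 (h1 a) (h2 a))"
  unfolding colinear_def
proof (intro conjI ballI allI impI)
  fix x L assume x: "x \<in> A" and L: "set L \<subseteq> UNIV \<times> A \<and> tensor_eq sc (vscale sc) L (coact \<Delta> p x)"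
  have t1: "tensor_eq sc (vscale sc) (map (\<lambda>(u, y). (u, h1 y)) L) (coact \<Delta> n1 (h1 x))"
    using h1 x L unfolding colinear_def by blast
  have t2: "tensor_eq sc (vscale sc) (map (\<lambda>(u, y). (u, h2 y)) L) (coact \<Delta> n2 (h2 x))"
    using h2 x L unfolding colinear_def by blast
  have "tensor_eq sc (vscale sc) (map (\<lambda>(u, y). (u, join n1 (h1 y) (h2 y))) L)
      (map (\<lambda>(u, y). (u, join n1 (h1 y) 0)) L @ map (\<lambda>(u, y). (u, join n1 0 (h2 y))) L)"
    using tensor_eq_map_add_right[of sc "vscale sc" "\<lambda>p. fst p" "\<lambda>p. join n1 (h1 (snd p)) 0"
        "\<lambda>p. join n1 0 (h2 (snd p))" L]
    by (simp add: case_prod_unfold join_add)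
  also have "tensor_eq sc (vscale sc) \<dots>
      (map (\<lambda>(u, w). (u, join n1 w 0)) (coact \<Delta> n1 (h1 x))
        @ map (\<lambda>(u, w). (u, join n1 0 w)) (coact \<Delta> n2 (h2 x)))"
    using tensor_eq_join[OF t1 t2, of n1] by (simp add: case_prod_unfold comp_def)
  also have "\<dots> = coact \<Delta> (n1 + n2) (join n1 (h1 x) (h2 x))"
    using h1 x B1 unfolding coact_add_dim colinear_def by (auto simp: trunc_join shift_join)
  finally show "tensor_eq sc (vscale sc) (map (\<lambda>(u, y). (u, join n1 (h1 y) (h2 y))) L)
      (coact \<Delta> (n1 + n2) (join n1 (h1 x) (h2 x)))" .
qed (use h1 h2 in \<open>auto simp: dsum_set_def colinear_def join_add join_vscale\<close>)


lemma subcomodule_dsum_set: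
  assumes sM1: "subcomodule sc \<Delta> n1 M1" and sM2: "subcomodule sc \<Delta> n2 M2"
  shows "subcomodule sc \<Delta> (n1 + n2) (dsum_set n1 M1 M2)"
proof -
  have M1: "M1 \<subseteq> Cn n1" "0 \<in> M1" "\<And>x y. x \<in> M1 \<Longrightarrow> y \<in> M1 \<Longrightarrow> x + y \<in> M1"
    "\<And>a x. x \<in> M1 \<Longrightarrow> vscale sc a x \<in> M1"
    using sM1 by (auto simp: subcomodule_def)
  have M2: "M2 \<subseteq> Cn n2" "0 \<in> M2" "\<And>x y. x \<in> M2 \<Longrightarrow> y \<in> M2 \<Longrightarrow> x + y \<in> M2"
    "\<And>a x. x \<in> M2 \<Longrightarrow> vscale sc a x \<in> M2"
    using sM2 by (auto simp: subcomodule_def)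
  have "dsum_set n1 M1 M2 \<subseteq> Cn (n1 + n2)"
    using M1(1) M2(1) join_in_Cn unfolding dsum_set_def by blast
  moreover have "0 = join n1 0 0" by (simp add: join_def fun_eq_iff)
  then have "0 \<in> dsum_set n1 M1 M2"
    using M1(2) M2(2) unfolding dsum_set_def by blast
  moreover have "x + y \<in> dsum_set n1 M1 M2" if "x \<in> dsum_set n1 M1 M2" "y \<in> dsum_set n1 M1 M2" for x y
    using that M1(3) M2(3) unfolding dsum_set_def by (force simp: join_add)
  moreover have "vscale sc a x \<in> dsum_set n1 M1 M2" if "x \<in> dsum_set n1 M1 M2" for a x
    using that M1(4) M2(4) unfolding dsum_set_def by (force simp: join_vscale)
  moreover have "\<exists>L. set L \<subseteq> UNIV \<times> dsum_set n1 M1 M2 \<and> tensor_eq sc (vscale sc) L (coact \<Delta> (n1 + n2) z)"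
    if z: "z \<in> dsum_set n1 M1 M2" for z
  proof -
    obtain x y where xy: "z = join n1 x y" "x \<in> M1" "y \<in> M2"
      using z unfolding dsum_set_def by blast
    obtain L1 where L1: "set L1 \<subseteq> UNIV \<times> M1" "tensor_eq sc (vscale sc) L1 (coact \<Delta> n1 x)"
      using sM1 xy(2) unfolding subcomodule_def by blast
    obtain L2 where L2: "set L2 \<subseteq> UNIV \<times> M2" "tensor_eq sc (vscale sc) L2 (coact \<Delta> n2 y)"
      using sM2 xy(3) unfolding subcomodule_def by blast
    let ?L = "map (\<lambda>(u, w). (u, join n1 w 0)) L1 @ map (\<lambda>(u, w). (u, join n1 0 w)) L2"
    have "set ?L \<subseteq> UNIV \<times> dsum_set n1 M1 M2"
      using L1(1) L2(1) M1(2) M2(2) unfolding dsum_set_def by fastforce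
    moreover have "coact \<Delta> (n1 + n2) z = map (\<lambda>(u, w). (u, join n1 w 0)) (coact \<Delta> n1 x)
        @ map (\<lambda>(u, w). (u, join n1 0 w)) (coact \<Delta> n2 y)"
      unfolding coact_add_dim xy(1) trunc_join[OF subsetD[OF M1(1) xy(2)]] shift_join ..
    then have "tensor_eq sc (vscale sc) ?L (coact \<Delta> (n1 + n2) z)"
      using tensor_eq_join[OF L1(2) L2(2), of n1] by simp
    ultimately show ?thesis by blast
  qed
  ultimately show ?thesis unfolding subcomodule_def by auto
qed

lemma injective_comod_dsum_set:
  assumes M1: "injective_comod sc \<Delta> n1 M1" and M2: "injective_comod sc \<Delta> n2 M2"
  shows "injective_comod sc \<Delta> (n1 + n2) (dsum_set n1 M1 M2)"
  unfolding injective_comod_def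
proof (intro conjI allI impI)
  have sM1: "subcomodule sc \<Delta> n1 M1" and sM2: "subcomodule sc \<Delta> n2 M2"
    using M1 M2 by (simp_all add: injective_comod_def)
  show sD: "subcomodule sc \<Delta> (n1 + n2) (dsum_set n1 M1 M2)"
    by (rule subcomodule_dsum_set[OF sM1 sM2])
  have M1C: "M1 \<subseteq> Cn n1" using sM1 by (rule subcomodule_subset_Cn)
  have DC: "dsum_set n1 M1 M2 \<subseteq> Cn (n1 + n2)" using sD by (rule subcomodule_subset_Cn)
  fix p A B g
  assume "subcomodule sc \<Delta> p A \<and> subcomodule sc \<Delta> p B \<and> A \<subseteq> B
    \<and> colinear sc \<Delta> p A (n1 + n2) (dsum_set n1 M1 M2) g"
  then have ext: "subcomodule sc \<Delta> p A" "subcomodule sc \<Delta> p B" "A \<subseteq> B"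
    and g: "colinear sc \<Delta> p A (n1 + n2) (dsum_set n1 M1 M2) g" by auto
  have "colinear sc \<Delta> (n1 + n2) (dsum_set n1 M1 M2) n1 M1 (trunc n1)"
    by (rule colinear_trunc[OF DC]) (auto simp: dsum_set_def trunc_join subsetD[OF M1C])
  from colinear_comp[OF g this] obtain h1 where h1: "colinear sc \<Delta> p B n1 M1 h1" "\<forall>x\<in>A. h1 x = trunc n1 (g x)"
    using M1 ext unfolding injective_comod_def by blast
  have "colinear sc \<Delta> (n1 + n2) (dsum_set n1 M1 M2) n2 M2 (shift n1)"
    by (rule colinear_shift[OF DC]) (auto simp: dsum_set_def shift_join)
  from colinear_comp[OF g this] obtain h2 where h2: "colinear sc \<Delta> p B n2 M2 h2" "\<forall>x\<in>A. h2 x = shift n1 (g x)"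
    using M2 ext unfolding injective_comod_def by blast
  have "colinear sc \<Delta> p B (n1 + n2) (dsum_set n1 M1 M2) (\<lambda>b. join n1 (h1 b) (h2 b))"
    by (rule colinear_join[OF h1(1) h2(1) M1C])
  moreover have "\<forall>x\<in>A. join n1 (h1 x) (h2 x) = g x"
    using h1(2) h2(2) by (simp add: join_trunc_shift)
  ultimately show "\<exists>h. colinear sc \<Delta> p B (n1 + n2) (dsum_set n1 M1 M2) h \<and> (\<forall>x\<in>A. h x = g x)"
    by blast
qed

lemma valid_obj_dsum:
  "valid_obj sc \<Delta> P \<Longrightarrow> valid_obj sc \<Delta> Q \<Longrightarrow> valid_obj sc \<Delta> (dsum P Q)"
  by (cases P, cases Q) (simp add: dsum_eq valid_obj_def injective_comod_dsum_set)

lemma cotr_data_dsum: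
  assumes r1: "cotr_data sc \<Delta> n1 M1 n1 (\<lambda>x. x) r1" and r2: "cotr_data sc \<Delta> n2 M2 n2 (\<lambda>x. x) r2"
    and M1: "subcomodule sc \<Delta> n1 M1" and M2: "subcomodule sc \<Delta> n2 M2"
  shows "cotr_data sc \<Delta> (n1 + n2) (dsum_set n1 M1 M2) (n1 + n2) (\<lambda>x. x)
           (\<lambda>w. join n1 (r1 (trunc n1 w)) (r2 (shift n1 w)))"
  unfolding cotr_data_def
proof (intro conjI)
  have M1C: "M1 \<subseteq> Cn n1" using M1 by (rule subcomodule_subset_Cn)
  have "colinear sc \<Delta> (n1 + n2) (Cn (n1 + n2)) n1 (Cn n1) (trunc n1)"
    by (rule colinear_trunc) (auto simp: trunc_in_Cn)
  moreover have "colinear sc \<Delta> (n1 + n2) (Cn (n1 + n2)) n2 (Cn n2) (shift n1)"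
    by (rule colinear_shift) (auto simp: shift_def Cn_def)
  ultimately show "colinear sc \<Delta> (n1 + n2) (Cn (n1 + n2)) (n1 + n2) (dsum_set n1 M1 M2)
      (\<lambda>w. join n1 (r1 (trunc n1 w)) (r2 (shift n1 w)))"
    using r1 r2 colinear_join[OF colinear_comp colinear_comp M1C] by (simp add: cotr_data_def)
  show "colinear sc \<Delta> (n1 + n2) (dsum_set n1 M1 M2) (n1 + n2) (Cn (n1 + n2)) (\<lambda>x. x)"
    by (rule colinear_inclusion[OF subcomodule_dsum_set[OF M1 M2]])
  show "\<forall>x\<in>dsum_set n1 M1 M2. join n1 (r1 (trunc n1 x)) (r2 (shift n1 x)) = x"
    using r1 r2 M1C by (auto simp: dsum_set_def cotr_data_def trunc_join shift_join subsetD)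
qed simp

lemma obj_corank_dsum:
  assumes P: "valid_obj sc \<Delta> P" and Q: "valid_obj sc \<Delta> Q"
  shows "obj_corank (dsum P Q) = (\<lambda>c. obj_corank P c + obj_corank Q c)"
proof -
  obtain n1 M1 n2 M2 where PQ: "P = (n1, M1)" "Q = (n2, M2)" by (cases P, cases Q)
  obtain r1 where r1: "cotr_data sc \<Delta> n1 M1 n1 (\<lambda>x. x) r1"
    using P PQ cotr_data_retraction by blast
  obtain r2 where r2: "cotr_data sc \<Delta> n2 M2 n2 (\<lambda>x. x) r2"
    using Q PQ cotr_data_retraction by blast
  have M1: "subcomodule sc \<Delta> n1 M1" and M2: "subcomodule sc \<Delta> n2 M2"
    using P Q PQ by (simp_all add: valid_obj_def injective_comod_def)
  define s where "s w = join n1 (r1 (trunc n1 w)) (r2 (shift n1 w))" for w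
  have D: "cotr_data sc \<Delta> (n1 + n2) (dsum_set n1 M1 M2) (n1 + n2) (\<lambda>x. x) s"
    unfolding s_def by (rule cotr_data_dsum[OF r1 r2 M1 M2])
  have r0: "r1 0 = 0" "r2 0 = 0"
    using r1 r2 klinear_on_zero[OF colinear_klinear_on, OF _ Cn_zero] by (auto simp: cotr_data_def)
  have "s (vins l c) l = r1 (vins l c) l" if "l < n1" for l c
  proof -
    have "shift n1 (vins l c) = 0" using that by (auto simp: shift_def vins_def fun_eq_iff)
    then show ?thesis using that r0 by (simp add: s_def join_def trunc_Cn Cn_vins)
  qed
  moreover have "s (vins (n1 + l) c) (n1 + l) = r2 (vins l c) l" for l c
  proof -
    have "trunc n1 (vins (n1 + l) c) = 0" "shift n1 (vins (n1 + l) c) = vins l c"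
      by (auto simp: trunc_def shift_def vins_def fun_eq_iff)
    then show ?thesis using r0 by (simp add: s_def join_def)
  qed
  ultimately have "corank sc \<Delta> \<epsilon> (n1 + n2) (\<lambda>x. x) s c
      = corank sc \<Delta> \<epsilon> n1 (\<lambda>x. x) r1 c + corank sc \<Delta> \<epsilon> n2 (\<lambda>x. x) r2 c" for c
    by (simp add: corank_eq[OF D] corank_eq[OF r1] corank_eq[OF r2] sum_lessThan_add)
  then show ?thesis
    using obj_corank_eq[OF D] obj_corank_eq[OF r1] obj_corank_eq[OF r2] by (simp add: PQ dsum_eq fun_eq_iff)
qed

section \<open>The corank homomorphism\<close>

lemma valid_obj_zobj: "valid_obj sc \<Delta> zobj"
proof -
  have coact0: "coact \<Delta> 0 x = []" for x by (simp add: coact_def)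
  have "subcomodule sc \<Delta> 0 {0}"
    unfolding subcomodule_def by (auto simp: Cn_def coact0 tensor_eq_refl intro!: exI[of _ "[]"])
  moreover have "colinear sc \<Delta> p B 0 {0} (\<lambda>_. 0)" for p B
    unfolding colinear_def coact0 by (auto intro: tensor_eq_map_zero_right)
  moreover have "g x = 0" if "colinear sc \<Delta> p A 0 {0} g" "x \<in> A" for p A g x
    using that by (auto simp: colinear_def)
  ultimately show ?thesis
    unfolding valid_obj_def zobj_def injective_comod_def by (simp, metis)
qed

lemma obj_corank_zobj: "obj_corank zobj = (\<lambda>_. 0)"
proof -
  obtain r where r: "cotr_data sc \<Delta> 0 {0} 0 (\<lambda>x. x) r"
    using valid_obj_zobj cotr_data_retraction by (auto simp: zobj_def)
  show ?thesis using obj_corank_eq[OF r] corank_eq[OF r] by (simp add: zobj_def fun_eq_iff)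
qed

lemma coHH0_add:
  assumes x: "x \<in> coHH0 sc \<Delta>" and y: "y \<in> coHH0 sc \<Delta>"
  shows "x + y \<in> coHH0 sc \<Delta>"
proof -
  let ?sw = "map (\<lambda>(u, v). (v, u))"
  have "tensor_eq sc sc (\<Delta> (x + y)) (\<Delta> x @ \<Delta> y)" by (rule Delta_add)
  also have "tensor_eq sc sc \<dots> (?sw (\<Delta> x) @ ?sw (\<Delta> y))"
    by (rule tensor_eq_append[OF coHH0_tensor_eq[OF x] coHH0_tensor_eq[OF y]])
  also have "tensor_eq sc sc \<dots> (?sw (\<Delta> (x + y)))"
    using tensor_eq_swap[OF tensor_eq_sym[OF Delta_add]] by simp
  finally show ?thesis by (simp add: coHH0_def)
qed

lemma coHH0_sc:
  assumes x: "x \<in> coHH0 sc \<Delta>"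
  shows "sc a x \<in> coHH0 sc \<Delta>"
proof -
  let ?sw = "map (\<lambda>(u, v). (v, u))" and ?S = "map (\<lambda>(u, v). (sc a u, v))"
  have "tensor_eq sc sc (\<Delta> (sc a x)) (?S (\<Delta> x))" by (rule Delta_sc)
  also have "tensor_eq sc sc \<dots> (?S (?sw (\<Delta> x)))"
    using tensor_eq_map_prod[OF coHH0_tensor_eq[OF x], of "sc a" "\<lambda>v. v" sc sc]
    by (simp add: sc_add sc_commute)
  also have "tensor_eq sc sc (map (\<lambda>p. (sc a (snd p), fst p)) (\<Delta> x))
      (map (\<lambda>p. (snd p, sc a (fst p))) (\<Delta> x))"
    by (rule tensor_eq_map_pointwise) (rule tensor_eq_bal)
  then have "tensor_eq sc sc (?S (?sw (\<Delta> x))) (?sw (?S (\<Delta> x)))"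
    by (simp add: case_prod_unfold comp_def)
  also have "tensor_eq sc sc \<dots> (?sw (\<Delta> (sc a x)))"
    by (rule tensor_eq_swap[OF tensor_eq_sym[OF Delta_sc]])
  finally show ?thesis by (simp add: coHH0_def)
qed

lemma obj_corank_in_dual:
  assumes P: "valid_obj sc \<Delta> P"
  shows "obj_corank P \<in> carrier (dual_coHH0 sc \<Delta>)"
proof -
  obtain n M where nM: "P = (n, M)" by (cases P)
  obtain r where r: "cotr_data sc \<Delta> n M n (\<lambda>x. x) r"
    using P nM cotr_data_retraction by blast
  have L: "klinear_on (Cn n) r" using colinear_klinear_on[OF cotr_data_colinear[OF r]] by simp
  have "obj_corank P c = (if c \<in> coHH0 sc \<Delta> then (\<Sum>l<n. entry r l l c) else 0)" for c
    using obj_corank_eq[OF r] corank_eq[OF r] nM by (simp add: entry_def)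
  then show ?thesis
    by (simp add: dual_coHH0_def coHH0_add coHH0_sc entry_add[OF L] entry_sc[OF L]
        sum.distrib sum_distrib_left)
qed

lemma iso_obj_refl: "valid_obj sc \<Delta> X \<Longrightarrow> iso_obj sc \<Delta> X X"
  unfolding iso_obj_def using colinear_id bij_betw_id[unfolded id_def] by blast

lemma K0cls_self:
  assumes P: "valid_obj sc \<Delta> P" and Q: "valid_obj sc \<Delta> Q"
  shows "(P, Q) \<in> K0cls sc \<Delta> P Q"
proof -
  have "K0rel sc \<Delta> (P, Q) (P, Q)"
    unfolding K0rel_def using valid_obj_zobj iso_obj_refl valid_obj_dsum P Q
    by (intro exI[of _ zobj]) simp
  with P Q show ?thesis by (simp add: K0cls_def)
qed

lemma obj_corank_diff_K0cls:
  assumes P: "valid_obj sc \<Delta> P" and Q: "valid_obj sc \<Delta> Q" and PQ: "PQ \<in> K0cls sc \<Delta> P Q"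
  shows "obj_corank (fst PQ) c - obj_corank (snd PQ) c = obj_corank P c - obj_corank Q c"
proof -
  have P': "valid_obj sc \<Delta> (fst PQ)" and Q': "valid_obj sc \<Delta> (snd PQ)"
    and "K0rel sc \<Delta> (P, Q) PQ"
    using PQ by (simp_all add: K0cls_def)
  then obtain R where R: "valid_obj sc \<Delta> R"
    and iso: "iso_obj sc \<Delta> (dsum (dsum P (snd PQ)) R) (dsum (dsum (fst PQ) Q) R)"
    by (auto simp: K0rel_def)
  have "obj_corank (dsum (dsum P (snd PQ)) R) = obj_corank (dsum (dsum (fst PQ) Q) R)"
    using obj_corank_iso iso valid_obj_dsum P Q P' Q' R by (metis prod.collapse)
  then have "obj_corank P c + obj_corank (snd PQ) c + obj_corank R c
      = obj_corank (fst PQ) c + obj_corank Q c + obj_corank R c"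
    by (simp add: obj_corank_dsum valid_obj_dsum P Q P' Q' R fun_eq_iff)
  then show ?thesis by (simp add: algebra_simps)
qed

definition corank_hom :: "('c cobj \<times> 'c cobj) set \<Rightarrow> 'c \<Rightarrow> 'k" where
  "corank_hom X = (let PQ = SOME PQ. PQ \<in> X in (\<lambda>c. obj_corank (fst PQ) c - obj_corank (snd PQ) c))"

lemma corank_hom_K0cls:
  assumes P: "valid_obj sc \<Delta> P" and Q: "valid_obj sc \<Delta> Q"
  shows "corank_hom (K0cls sc \<Delta> P Q) = (\<lambda>c. obj_corank P c - obj_corank Q c)"
proof -
  have "(SOME PQ. PQ \<in> K0cls sc \<Delta> P Q) \<in> K0cls sc \<Delta> P Q"
    using K0cls_self[OF P Q] by (rule someI)
  then show ?thesis unfolding corank_hom_def Let_def using obj_corank_diff_K0cls[OF P Q] by simp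
qed

lemma corank_hom_in_hom: "corank_hom \<in> hom (K0c sc \<Delta>) (dual_coHH0 sc \<Delta>)"
proof (rule homI)
  fix X assume "X \<in> carrier (K0c sc \<Delta>)"
  then obtain P Q where X: "X = K0cls sc \<Delta> P Q" and P: "valid_obj sc \<Delta> P" and Q: "valid_obj sc \<Delta> Q"
    by (auto simp: K0c_def)
  show "corank_hom X \<in> carrier (dual_coHH0 sc \<Delta>)"
    using obj_corank_in_dual[OF P] obj_corank_in_dual[OF Q]
    by (simp add: X corank_hom_K0cls[OF P Q] dual_coHH0_def algebra_simps)
next
  fix X Y assume "X \<in> carrier (K0c sc \<Delta>)" "Y \<in> carrier (K0c sc \<Delta>)"
  then obtain P Q P' Q' where X: "X = K0cls sc \<Delta> P Q" "valid_obj sc \<Delta> P" "valid_obj sc \<Delta> Q"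
    and Y: "Y = K0cls sc \<Delta> P' Q'" "valid_obj sc \<Delta> P'" "valid_obj sc \<Delta> Q'"
    by (auto simp: K0c_def)
  define A where "A = (SOME PQ. PQ \<in> X)"
  define B where "B = (SOME PQ. PQ \<in> Y)"
  have "A \<in> X" unfolding A_def X(1) using K0cls_self[OF X(2,3)] by (rule someI)
  moreover have "B \<in> Y" unfolding B_def Y(1) using K0cls_self[OF Y(2,3)] by (rule someI)
  ultimately have vA: "valid_obj sc \<Delta> (fst A)" "valid_obj sc \<Delta> (snd A)"
    and vB: "valid_obj sc \<Delta> (fst B)" "valid_obj sc \<Delta> (snd B)"
    using X(1) Y(1) by (simp_all add: K0cls_def)
  have "X \<otimes>\<^bsub>K0c sc \<Delta>\<^esub> Y = K0cls sc \<Delta> (dsum (fst A) (fst B)) (dsum (snd A) (snd B))"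
    by (simp add: K0c_def A_def B_def Let_def)
  moreover have "corank_hom X = (\<lambda>c. obj_corank (fst A) c - obj_corank (snd A) c)"
    and "corank_hom Y = (\<lambda>c. obj_corank (fst B) c - obj_corank (snd B) c)"
    by (simp_all add: corank_hom_def A_def B_def Let_def)
  ultimately show "corank_hom (X \<otimes>\<^bsub>K0c sc \<Delta>\<^esub> Y) = corank_hom X \<otimes>\<^bsub>dual_coHH0 sc \<Delta>\<^esub> corank_hom Y"
    by (simp add: corank_hom_K0cls valid_obj_dsum vA vB obj_corank_dsum dual_coHH0_def fun_eq_iff
        algebra_simps)
qed


end

theorem theorem2p14:
  fixes sc :: "'k::comm_ring_1 \<Rightarrow> 'c::ab_group_add \<Rightarrow> 'c"
    and \<Delta> :: "'c \<Rightarrow> ('c \<times> 'c) list"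
    and \<epsilon> :: "'c \<Rightarrow> 'k"
  assumes "finite_product_of_fields TYPE('k)"
    and "coalgebra sc \<Delta> \<epsilon>"
  shows "\<exists>\<phi>. \<phi> \<in> hom (K0c sc \<Delta>) (dual_coHH0 sc \<Delta>)
           \<and> (\<forall>n M m i s. valid_obj sc \<Delta> (n, M) \<and> cotr_data sc \<Delta> n M m i s \<longrightarrow>
                 \<phi> (K0cls sc \<Delta> (n, M) zobj) = corank sc \<Delta> \<epsilon> m i s)"
proof -
  interpret k_coalgebra sc \<Delta> \<epsilon> by (rule k_coalgebra.intro) (rule assms(2))
  have "corank_hom (K0cls sc \<Delta> (n, M) zobj) = corank sc \<Delta> \<epsilon> m i s"
    if "valid_obj sc \<Delta> (n, M)" "cotr_data sc \<Delta> n M m i s" for n M m i s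
    using corank_hom_K0cls[OF that(1) valid_obj_zobj] obj_corank_zobj obj_corank_eq[OF that(2)]
    by simp
  with corank_hom_in_hom show ?thesis by blast
qed

end
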